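(* For $\mathcal{A}$ a thin concurrent game, the triple $(\mathrm{CC}_{\tilde{A}}, \mathrm{CC}_{l_A}, \mathrm{CC}_{r_A})$ is a symmetry and makes $\mathrm{CC}_A$ an essp, written $\mathrm{CC}_\mathcal{A}$. Moreover, $cc_{\mathcal{A}} : \mathrm{CC}_\mathcal{A} \to \mathcal{A}^\perp \parallel \mathcal{A}$ is a $\sim$-strategy.
   Context: Event structures with polarities (esp), configurations $\mathcal{C}(E)$ (finite consistent down-closed sets), and immediate causality $e \rightarrow e'$ ($e<e'$ with nothing strictly between). An essp is an esp $A$ with a symmetry, i.e. an event structure $\tilde A$ with open maps $l_A,r_A:\tilde A\to A$ that are jointly monic and form an equivalence relation; equivalently an isomorphism family $\mathbb{S}_A$ of bijections between configurations (closed under identities, composition, inverse, restriction, and with the extension property). A thin concurrent game (tcg) is an essp which is thin (if $\theta\in\mathbb{S}_A$ has two positive extensions in $\mathbb{S}_A$ with compatible domains, their union is in $\mathbb{S}_A$), race-preserving ($l_A$ preserves races between a negative and a positive extension), and has receptive thin sub-symmetries of $\mathcal{A}^\perp$ and $\mathcal{A}$. For an esp $A$, the copycat esp $\mathrm{CC}_A$ has events those of $A^\perp\parallel A$, causality the transitive closure of that of $A^\perp\parallel A$ together with $(1,a) \rightarrow (2,a)$ for $a$ positive in $A^\perp$... precisely $(i,a)\rightarrow(3-i,a)$ whenever $(i,a)$ is negative in $A^\perp\parallel A$ ... i.e. each positive copy of $a$ depends on the opposite negative copy, and $cc_A:\mathrm{CC}_A\to A^\perp\parallel A$ is the identity on events;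 $\mathrm{CC}$ extends to a functor on esps by $\mathrm{CC}_f(i,a)=(i,f a)$. A $\sim$-strategy $\sigma:\mathcal{S}\to\mathcal{A}$ is a map of essps which is courteous (if $s_1 \rightarrow s_2$ with $\mathrm{pol}(s_1)=+$ or $\mathrm{pol}(s_2)=-$ then $\sigma s_1 \rightarrow \sigma s_2$), strong-receptive (any extension of $\sigma\theta$, $\theta\in\mathbb{S}_S$, by a pair of negative events lifts uniquely to an extension of $\theta$ in $\mathbb{S}_S$), and thin ($\mathcal{S}$ thin). *)

theory Defs
  imports Main
begin

text \<open>An event structure with polarity: events, causal order, consistency
  (a set of finite sets of events) and polarity (True = positive, False = negative).
  For plain event structures the polarity field is ignored.\<close>

record 'e esp =
  ev  :: "'e set"
  leq :: "'e \<Rightarrow> 'e \<Rightarrow> bool"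
  con :: "'e set set"
  pol :: "'e \<Rightarrow> bool"

definition is_es :: "'e esp \<Rightarrow> bool" where
  "is_es E \<longleftrightarrow>
     (\<forall>a b. leq E a b \<longrightarrow> a \<in> ev E \<and> b \<in> ev E) \<and>
     (\<forall>a\<in>ev E. leq E a a) \<and>
     (\<forall>a b. leq E a b \<and> leq E b a \<longrightarrow> a = b) \<and>
     (\<forall>a b c. leq E a b \<and> leq E b c \<longrightarrow> leq E a c) \<and>
     (\<forall>a\<in>ev E. finite {b. leq E b a}) \<and>
     (\<forall>X\<in>con E. finite X \<and> X \<subseteq> ev E) \<and>
     {} \<in> con E \<and>
     (\<forall>a\<in>ev E. {a} \<in> con E) \<and>
     (\<forall>X Y. X \<in> con E \<and> Y \<subseteq> X \<longrightarrow> Y \<in> con E) \<and>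
     (\<forall>X a b. X \<in> con E \<and> b \<in> X \<and> leq E a b \<longrightarrow> insert a X \<in> con E)"

definition config :: "'e esp \<Rightarrow> 'e set \<Rightarrow> bool" where
  "config E x \<longleftrightarrow> x \<in> con E \<and> (\<forall>a b. b \<in> x \<and> leq E a b \<longrightarrow> a \<in> x)"

definition lt :: "'e esp \<Rightarrow> 'e \<Rightarrow> 'e \<Rightarrow> bool" where
  "lt E a b \<longleftrightarrow> leq E a b \<and> a \<noteq> b"

definition imm :: "'e esp \<Rightarrow> 'e \<Rightarrow> 'e \<Rightarrow> bool" where
  "imm E a b \<longleftrightarrow> lt E a b \<and> \<not> (\<exists>c. lt E a c \<and> lt E c b)"

definition es_map :: "'e esp \<Rightarrow> 'f esp \<Rightarrow> ('e \<Rightarrow> 'f) \<Rightarrow> bool" where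
  "es_map E F f \<longleftrightarrow> (\<forall>a\<in>ev E. f a \<in> ev F) \<and>
     (\<forall>x. config E x \<longrightarrow> config F (f ` x) \<and> inj_on f x)"

definition esp_map :: "'e esp \<Rightarrow> 'f esp \<Rightarrow> ('e \<Rightarrow> 'f) \<Rightarrow> bool" where
  "esp_map E F f \<longleftrightarrow> es_map E F f \<and> (\<forall>a\<in>ev E. pol F (f a) = pol E a)"

definition rigid :: "'e esp \<Rightarrow> 'f esp \<Rightarrow> ('e \<Rightarrow> 'f) \<Rightarrow> bool" where
  "rigid E F f \<longleftrightarrow> (\<forall>a b. leq E a b \<longrightarrow> leq F (f a) (f b))"

definition open_map :: "'e esp \<Rightarrow> 'f esp \<Rightarrow> ('e \<Rightarrow> 'f) \<Rightarrow> bool" where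
  "open_map E F f \<longleftrightarrow> es_map E F f \<and> rigid E F f \<and>
     (\<forall>x y. config E x \<and> config F y \<and> f ` x \<subseteq> y \<longrightarrow>
        (\<exists>z. config E z \<and> x \<subseteq> z \<and> f ` z = y))"

definition bij_rel :: "('a \<times> 'b) set \<Rightarrow> bool" where
  "bij_rel \<theta> \<longleftrightarrow> (\<forall>a b c. (a,b) \<in> \<theta> \<and> (a,c) \<in> \<theta> \<longrightarrow> b = c) \<and>
                  (\<forall>a b c. (a,c) \<in> \<theta> \<and> (b,c) \<in> \<theta> \<longrightarrow> a = b)"

definition iso_family :: "'e esp \<Rightarrow> ('e \<times> 'e) set set \<Rightarrow> bool" where
  "iso_family E S \<longleftrightarrow>
     (\<forall>\<theta>\<in>S. config E (fst ` \<theta>) \<and> config E (snd ` \<theta>) \<and> bij_rel \<theta>) \<and>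
     (\<forall>x. config E x \<longrightarrow> Id_on x \<in> S) \<and>
     (\<forall>\<theta>\<in>S. \<theta>\<inverse> \<in> S) \<and>
     (\<forall>\<theta> \<phi>. \<theta> \<in> S \<and> \<phi> \<in> S \<and> snd ` \<theta> = fst ` \<phi> \<longrightarrow> \<theta> O \<phi> \<in> S) \<and>
     (\<forall>\<theta> x. \<theta> \<in> S \<and> config E x \<and> x \<subseteq> fst ` \<theta> \<longrightarrow> {p\<in>\<theta>. fst p \<in> x} \<in> S) \<and>
     (\<forall>\<theta> y. \<theta> \<in> S \<and> config E y \<and> fst ` \<theta> \<subseteq> y \<longrightarrow>
        (\<exists>\<theta>'\<in>S. \<theta> \<subseteq> \<theta>' \<and> fst ` \<theta>' = y))"

definition sym_fam :: "'t esp \<Rightarrow> ('t \<Rightarrow> 'a) \<Rightarrow> ('t \<Rightarrow> 'a) \<Rightarrow> ('a \<times> 'a) set set" where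
  "sym_fam T l r = {(\<lambda>e. (l e, r e)) ` x | x. config T x}"

text \<open>A symmetry on A: an event structure T with open maps l, r : T \<rightarrow> A, jointly monic,
  forming an equivalence relation -- expressed through the induced family of
  bijections being an isomorphism family (reflexivity, symmetry, transitivity,
  plus restriction/extension).\<close>
definition is_symmetry :: "'a esp \<Rightarrow> 't esp \<Rightarrow> ('t \<Rightarrow> 'a) \<Rightarrow> ('t \<Rightarrow> 'a) \<Rightarrow> bool" where
  "is_symmetry A T l r \<longleftrightarrow> is_es T \<and> open_map T A l \<and> open_map T A r \<and>
     inj_on (\<lambda>e. (l e, r e)) (ev T) \<and> iso_family A (sym_fam T l r)"

definition essp :: "'a esp \<Rightarrow> 't esp \<Rightarrow> ('t \<Rightarrow> 'a) \<Rightarrow> ('t \<Rightarrow> 'a) \<Rightarrow> bool" where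
  "essp A T l r \<longleftrightarrow> is_es A \<and> is_symmetry A T l r \<and> esp_map T A l \<and> esp_map T A r"

definition ext_pol :: "('a \<Rightarrow> bool) \<Rightarrow> bool \<Rightarrow> ('a \<times> 'a) set \<Rightarrow> ('a \<times> 'a) set \<Rightarrow> bool" where
  "ext_pol P b \<theta> \<theta>' \<longleftrightarrow> \<theta> \<subseteq> \<theta>' \<and> (\<forall>p\<in>\<theta>' - \<theta>. P (fst p) = b)"

definition thin_wrt :: "('a \<Rightarrow> bool) \<Rightarrow> 'a esp \<Rightarrow> ('a \<times> 'a) set set \<Rightarrow> bool" where
  "thin_wrt P A S \<longleftrightarrow> (\<forall>\<theta> \<theta>1 \<theta>2. \<theta> \<in> S \<and> \<theta>1 \<in> S \<and> \<theta>2 \<in> S \<and>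
       ext_pol P True \<theta> \<theta>1 \<and> ext_pol P True \<theta> \<theta>2 \<and> config A (fst ` \<theta>1 \<union> fst ` \<theta>2)
       \<longrightarrow> \<theta>1 \<union> \<theta>2 \<in> S)"

definition sub_symmetry :: "'a esp \<Rightarrow> ('a \<times> 'a) set set \<Rightarrow> ('a \<times> 'a) set set \<Rightarrow> bool" where
  "sub_symmetry A S S' \<longleftrightarrow> iso_family A S' \<and> S' \<subseteq> S"

definition receptive_wrt :: "('a \<Rightarrow> bool) \<Rightarrow> ('a \<times> 'a) set set \<Rightarrow> ('a \<times> 'a) set set \<Rightarrow> bool" where
  "receptive_wrt P S S' \<longleftrightarrow>
     (\<forall>\<theta> \<theta>'. \<theta> \<in> S' \<and> \<theta>' \<in> S \<and> ext_pol P False \<theta> \<theta>' \<longrightarrow> \<theta>' \<in> S')"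

definition race_preserving :: "'a esp \<Rightarrow> 't esp \<Rightarrow> ('t \<Rightarrow> 'a) \<Rightarrow> bool" where
  "race_preserving A T l \<longleftrightarrow>
     (\<forall>x e1 e2. config T x \<and> e1 \<notin> x \<and> e2 \<notin> x \<and>
        config T (insert e1 x) \<and> config T (insert e2 x) \<and>
        \<not> config T (insert e1 (insert e2 x)) \<and>
        \<not> pol T e1 \<and> pol T e2 \<longrightarrow>
        \<not> config A (insert (l e1) (insert (l e2) (l ` x))))"

definition tcg :: "'a esp \<Rightarrow> 't esp \<Rightarrow> ('t \<Rightarrow> 'a) \<Rightarrow> ('t \<Rightarrow> 'a)
                   \<Rightarrow> ('a \<times> 'a) set set \<Rightarrow> ('a \<times> 'a) set set \<Rightarrow> bool" where
  "tcg A T l r Sm Sp \<longleftrightarrow> essp A T l r \<and>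
     thin_wrt (pol A) A (sym_fam T l r) \<and>
     race_preserving A T l \<and>
     sub_symmetry A (sym_fam T l r) Sm \<and>
     thin_wrt (\<lambda>a. \<not> pol A a) A Sm \<and>
     receptive_wrt (\<lambda>a. \<not> pol A a) (sym_fam T l r) Sm \<and>
     sub_symmetry A (sym_fam T l r) Sp \<and>
     thin_wrt (pol A) A Sp \<and>
     receptive_wrt (pol A) (sym_fam T l r) Sp"

text \<open>A-dual par A, with events (1,a) (in dual of A) and (2,a) (in A).\<close>
definition dual_par :: "'e esp \<Rightarrow> (nat \<times> 'e) esp" where
  "dual_par A = \<lparr> ev = {(i,a). i \<in> {1,2} \<and> a \<in> ev A},
     leq = (\<lambda>(i,a) (j,b). i = j \<and> i \<in> {1,2} \<and> leq A a b),
     con = {X. X \<subseteq> {(i,a). i \<in> {1,2} \<and> a \<in> ev A} \<and> finite X \<and>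
                {a. (1,a) \<in> X} \<in> con A \<and> {a. (2,a) \<in> X} \<in> con A},
     pol = (\<lambda>(i,a). if i = 1 then \<not> pol A a else pol A a) \<rparr>"

definition cc_step :: "'e esp \<Rightarrow> nat \<times> 'e \<Rightarrow> nat \<times> 'e \<Rightarrow> bool" where
  "cc_step A p q \<longleftrightarrow> leq (dual_par A) p q \<or>
     (p \<in> ev (dual_par A) \<and> \<not> pol (dual_par A) p \<and> q = (3 - fst p, snd p))"

definition CC_leq :: "'e esp \<Rightarrow> nat \<times> 'e \<Rightarrow> nat \<times> 'e \<Rightarrow> bool" where
  "CC_leq A p q \<longleftrightarrow> p \<in> ev (dual_par A) \<and> q \<in> ev (dual_par A) \<and> (cc_step A)\<^sup>*\<^sup>* p q"

definition CC :: "'e esp \<Rightarrow> (nat \<times> 'e) esp" where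
  "CC A = \<lparr> ev = ev (dual_par A),
     leq = CC_leq A,
     con = {X. X \<subseteq> ev (dual_par A) \<and> finite X \<and>
               {p. \<exists>q\<in>X. CC_leq A p q} \<in> con (dual_par A)},
     pol = pol (dual_par A) \<rparr>"

definition cc_map :: "('a \<Rightarrow> 'b) \<Rightarrow> nat \<times> 'a \<Rightarrow> nat \<times> 'b" where
  "cc_map f = (\<lambda>(i,a). (i, f a))"

definition image_rel :: "('a \<Rightarrow> 'b) \<Rightarrow> ('a \<times> 'a) set \<Rightarrow> ('b \<times> 'b) set" where
  "image_rel f \<theta> = (\<lambda>(a,b). (f a, f b)) ` \<theta>"

definition essp_map :: "'s esp \<Rightarrow> 'u esp \<Rightarrow> ('u \<Rightarrow> 's) \<Rightarrow> ('u \<Rightarrow> 's) \<Rightarrow>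
                        'a esp \<Rightarrow> 't esp \<Rightarrow> ('t \<Rightarrow> 'a) \<Rightarrow> ('t \<Rightarrow> 'a) \<Rightarrow> ('s \<Rightarrow> 'a) \<Rightarrow> bool" where
  "essp_map S U lS rS A T lA rA \<sigma> \<longleftrightarrow> essp S U lS rS \<and> essp A T lA rA \<and> esp_map S A \<sigma> \<and>
     (\<forall>\<theta>\<in>sym_fam U lS rS. image_rel \<sigma> \<theta> \<in> sym_fam T lA rA)"

definition courteous :: "'s esp \<Rightarrow> 'a esp \<Rightarrow> ('s \<Rightarrow> 'a) \<Rightarrow> bool" where
  "courteous S A \<sigma> \<longleftrightarrow> (\<forall>s1 s2. imm S s1 s2 \<and> (pol S s1 \<or> \<not> pol S s2) \<longrightarrow>
                                  imm A (\<sigma> s1) (\<sigma> s2))"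

definition strong_receptive :: "'a esp \<Rightarrow> ('s \<times> 's) set set \<Rightarrow> ('a \<times> 'a) set set \<Rightarrow> ('s \<Rightarrow> 'a) \<Rightarrow> bool" where
  "strong_receptive A SS SA \<sigma> \<longleftrightarrow>
     (\<forall>\<theta> a1 a2. \<theta> \<in> SS \<and> a1 \<notin> fst ` image_rel \<sigma> \<theta> \<and>
        insert (a1, a2) (image_rel \<sigma> \<theta>) \<in> SA \<and> \<not> pol A a1 \<and> \<not> pol A a2 \<longrightarrow>
        (\<exists>!p. fst p \<notin> fst ` \<theta> \<and> insert p \<theta> \<in> SS \<and> \<sigma> (fst p) = a1 \<and> \<sigma> (snd p) = a2))"

definition sim_strategy :: "'s esp \<Rightarrow> 'u esp \<Rightarrow> ('u \<Rightarrow> 's) \<Rightarrow> ('u \<Rightarrow> 's) \<Rightarrow>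
                        'a esp \<Rightarrow> 't esp \<Rightarrow> ('t \<Rightarrow> 'a) \<Rightarrow> ('t \<Rightarrow> 'a) \<Rightarrow> ('s \<Rightarrow> 'a) \<Rightarrow> bool" where
  "sim_strategy S U lS rS A T lA rA \<sigma> \<longleftrightarrow>
     essp_map S U lS rS A T lA rA \<sigma> \<and>
     courteous S A \<sigma> \<and>
     strong_receptive A (sym_fam U lS rS) (sym_fam T lA rA) \<sigma> \<and>
     thin_wrt (pol S) S (sym_fam U lS rS)"

end

theory Submission
  imports Defs
begin

text \<open>A bijection between configurations of \<open>A\<^sup>\<perp> \<parallel> A\<close> lies in the symmetry induced by
  \<open>(CC l, CC r)\<close> exactly when it preserves the two sides, each side is a bijection of the
  symmetry of \<open>A\<close>, and, for copycat, it commutes with the pairing of a positive event with its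
  negative copy on the other side. Identities, inverses, composites and restrictions of such
  bijections are therefore again of this form, side by side. The real work is the extension
  property, i.e. openness of \<open>CC l\<close> and \<open>CC r\<close>: the events of the target configuration are
  added in the order of a rank that copycat causality strictly increases. A negative event is
  lifted by openness of \<open>l\<close>; a positive event of copycat has to be lifted to the copy of its
  already lifted negative twin, and the resulting set is consistent because an inconsistency
  would be a race between events of opposite polarity, which \<open>l\<close> preserves. Courtesy and strong
  receptivity of the identity \<open>CC A \<rightarrow> A\<^sup>\<perp> \<parallel> A\<close> follow from the shape of copycat causality,
  and thinness from the same adding argument.\<close>

lemma
  assumes "is_es E"
  shows es_leq_ev: "leq E a b \<Longrightarrow> a \<in> ev E \<and> b \<in> ev E"
    and es_refl: "a \<in> ev E \<Longrightarrow> leq E a a"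
    and es_antisym: "leq E a b \<Longrightarrow> leq E b a \<Longrightarrow> a = b"
    and es_trans: "leq E a b \<Longrightarrow> leq E b c \<Longrightarrow> leq E a c"
    and es_finite_below: "a \<in> ev E \<Longrightarrow> finite {b. leq E b a}"
    and es_con_finite: "X \<in> con E \<Longrightarrow> finite X"
    and es_con_ev: "X \<in> con E \<Longrightarrow> X \<subseteq> ev E"
    and es_con_empty: "{} \<in> con E"
    and es_con_singleton: "a \<in> ev E \<Longrightarrow> {a} \<in> con E"
    and es_con_subset: "X \<in> con E \<Longrightarrow> Y \<subseteq> X \<Longrightarrow> Y \<in> con E"
    and es_con_insert_below: "X \<in> con E \<Longrightarrow> b \<in> X \<Longrightarrow> leq E a b \<Longrightarrow> insert a X \<in> con E"
  using assms unfolding is_es_def by metis+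

lemma is_esI:
  assumes "\<And>a b. leq E a b \<Longrightarrow> a \<in> ev E"
    and "\<And>a b. leq E a b \<Longrightarrow> b \<in> ev E"
    and "\<And>a. a \<in> ev E \<Longrightarrow> leq E a a"
    and "\<And>a b. leq E a b \<Longrightarrow> leq E b a \<Longrightarrow> a = b"
    and "\<And>a b c. leq E a b \<Longrightarrow> leq E b c \<Longrightarrow> leq E a c"
    and "\<And>a. a \<in> ev E \<Longrightarrow> finite {b. leq E b a}"
    and "\<And>X. X \<in> con E \<Longrightarrow> finite X"
    and "\<And>X. X \<in> con E \<Longrightarrow> X \<subseteq> ev E"
    and "{} \<in> con E"
    and "\<And>a. a \<in> ev E \<Longrightarrow> {a} \<in> con E"
    and "\<And>X Y. X \<in> con E \<Longrightarrow> Y \<subseteq> X \<Longrightarrow> Y \<in> con E"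
    and "\<And>X a b. X \<in> con E \<Longrightarrow> b \<in> X \<Longrightarrow> leq E a b \<Longrightarrow> insert a X \<in> con E"
  shows "is_es E"
  unfolding is_es_def by (intro conjI allI ballI impI; (elim conjE)?; rule assms; assumption)

lemma configI: "x \<in> con E \<Longrightarrow> (\<And>a b. b \<in> x \<Longrightarrow> leq E a b \<Longrightarrow> a \<in> x) \<Longrightarrow> config E x"
  unfolding config_def by blast

lemma config_con: "config E x \<Longrightarrow> x \<in> con E"
  by (simp add: config_def)

lemma config_down_closed: "config E x \<Longrightarrow> b \<in> x \<Longrightarrow> leq E a b \<Longrightarrow> a \<in> x"
  unfolding config_def by blast

lemma config_ev: "is_es E \<Longrightarrow> config E x \<Longrightarrow> x \<subseteq> ev E"
  by (meson config_con es_con_ev)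

lemma finite_config: "is_es E \<Longrightarrow> config E x \<Longrightarrow> finite x"
  by (meson config_con es_con_finite)

lemma config_subset_down_closed:
  "is_es E \<Longrightarrow> config E x \<Longrightarrow> y \<subseteq> x \<Longrightarrow> (\<And>a b. b \<in> y \<Longrightarrow> leq E a b \<Longrightarrow> a \<in> y) \<Longrightarrow> config E y"
  by (meson config_con configI es_con_subset)

lemma config_Int: "is_es E \<Longrightarrow> config E x \<Longrightarrow> config E y \<Longrightarrow> config E (x \<inter> y)"
  by (rule config_subset_down_closed[of E x]) (auto dest: config_down_closed)

lemma config_below:
  assumes E: "is_es E" and a: "a \<in> ev E"
  shows "config E {b. leq E b a}"
proof (rule configI)
  have "insert a F \<in> con E" if "finite F" "F \<subseteq> {b. leq E b a}" for F
    using that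
  proof (induction F rule: finite_induct)
    case (insert f F)
    then show ?case
      using es_con_insert_below[OF E, of "insert a F" a f] by (simp add: insert_commute)
  qed (simp add: es_con_singleton[OF E a])
  from this[OF es_finite_below[OF E a]] show "{b. leq E b a} \<in> con E"
    using es_refl[OF E a] by (simp add: insert_absorb)
qed (use es_trans[OF E] in blast)

lemma card_below_less:
  assumes E: "is_es E" and "leq E a b" "a \<noteq> b"
  shows "card {c. leq E c a} < card {c. leq E c b}"
proof (rule psubset_card_mono)
  have b: "b \<in> ev E" using es_leq_ev[OF E \<open>leq E a b\<close>] by simp
  then show "finite {c. leq E c b}" by (rule es_finite_below[OF E])
  have "b \<notin> {c. leq E c a}" using es_antisym[OF E] assms(2,3) by blast
  then show "{c. leq E c a} \<subset> {c. leq E c b}"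
    using es_trans[OF E _ \<open>leq E a b\<close>] es_refl[OF E b] by blast
qed

lemma config_insertI:
  assumes "config E v" "insert t v \<in> con E" "\<And>s. leq E s t \<Longrightarrow> s \<noteq> t \<Longrightarrow> s \<in> v"
  shows "config E (insert t v)"
  using assms by (intro configI) (auto dest: config_down_closed)

lemma config_remove_maximal:
  assumes E: "is_es E" and v: "config E v" and max: "\<And>c. c \<in> v \<Longrightarrow> leq E e c \<Longrightarrow> c = e"
  shows "config E (v - {e})"
  using v max by (intro config_subset_down_closed[OF E v]) (auto dest: config_down_closed)

lemma
  assumes "es_map E F f"
  shows es_map_ev: "a \<in> ev E \<Longrightarrow> f a \<in> ev F"
    and es_map_config: "config E x \<Longrightarrow> config F (f ` x)"
    and es_map_inj_on: "config E x \<Longrightarrow> inj_on f x"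
  using assms unfolding es_map_def by blast+

lemma es_map_below: "es_map E F f \<Longrightarrow> config E x \<Longrightarrow> c \<in> x \<Longrightarrow> leq F b (f c) \<Longrightarrow> b \<in> f ` x"
  by (meson config_down_closed es_map_config imageI)

lemma open_map_liftD:
  "open_map E F f \<Longrightarrow> config E x \<Longrightarrow> config F y \<Longrightarrow> f ` x \<subseteq> y \<Longrightarrow> \<exists>z. config E z \<and> x \<subseteq> z \<and> f ` z = y"
  unfolding open_map_def by blast

lemma finite_has_max_by:
  fixes f :: "'a \<Rightarrow> nat"
  assumes "finite S" "S \<noteq> {}"
  obtains e where "e \<in> S" "\<And>e'. e' \<in> S \<Longrightarrow> f e' \<le> f e"
proof -
  have "Max (f ` S) \<in> f ` S" using assms by simp
  then obtain e where "e \<in> S" "f e = Max (f ` S)" by auto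
  with that show thesis using assms(1) by simp
qed

lemma finite_has_min_by:
  fixes f :: "'a \<Rightarrow> nat"
  assumes "finite S" "S \<noteq> {}"
  obtains e where "e \<in> S" "\<And>e'. e' \<in> S \<Longrightarrow> f e \<le> f e'"
proof -
  have "Min (f ` S) \<in> f ` S" using assms by simp
  then obtain e where "e \<in> S" "f e = Min (f ` S)" by auto
  with that show thesis using assms(1) by simp
qed

lemma inj_on_image_insert_eq:
  assumes inj: "inj_on f z" and X: "X \<subseteq> z" and t: "t \<in> z" and img: "f ` z = insert (f t) (f ` X)"
  shows "z = insert t X"
proof
  show "z \<subseteq> insert t X"
  proof
    fix w assume w: "w \<in> z"
    then have "f w \<in> insert (f t) (f ` X)" using img by blast
    then show "w \<in> insert t X"
    proof
      assume "f w = f t"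
      then show ?thesis using inj_onD[OF inj _ w t] by simp
    next
      assume "f w \<in> f ` X"
      then obtain w' where "w' \<in> X" "f w = f w'" by blast
      then show ?thesis using inj_onD[OF inj _ w] X by blast
    qed
  qed
qed (use X t in blast)

lemma finite_has_maximal_outside:
  assumes E: "is_es E" and u: "config E u" and v: "finite v" "u \<subseteq> v" "v \<noteq> u"
  obtains e where "e \<in> v" "e \<notin> u" "\<And>c. c \<in> v \<Longrightarrow> leq E e c \<Longrightarrow> c = e"
proof -
  obtain e where e: "e \<in> v - u" and max: "\<And>c. c \<in> v - u \<Longrightarrow> card {b. leq E b c} \<le> card {b. leq E b e}"
    using finite_has_max_by[of "v - u" "\<lambda>c. card {b. leq E b c}"] v by blast
  have "c = e" if "c \<in> v" "leq E e c" for c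
  proof (rule ccontr)
    assume "c \<noteq> e"
    moreover have "c \<notin> u" using e config_down_closed[OF u _ that(2)] by blast
    ultimately show False using max[of c] card_below_less[OF E that(2)] that(1) by fastforce
  qed
  with that e show thesis by blast
qed

section \<open>The game \<open>A\<^sup>\<perp> \<parallel> A\<close>\<close>

definition side :: "nat \<Rightarrow> (nat \<times> 'e) set \<Rightarrow> 'e set" where
  "side i X = {a. (i,a) \<in> X}"

lemma side_iff [simp]: "a \<in> side i X \<longleftrightarrow> (i,a) \<in> X"
  by (simp add: side_def)

lemma ev_dual_par_iff [simp]: "(i,a) \<in> ev (dual_par E) \<longleftrightarrow> (i = 1 \<or> i = 2) \<and> a \<in> ev E"
  by (simp add: dual_par_def)

lemma leq_dual_par [simp]: "leq (dual_par E) (i,a) (j,b) \<longleftrightarrow> i = j \<and> (i = 1 \<or> i = 2) \<and> leq E a b"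
  by (auto simp add: dual_par_def)

lemma pol_dual_par [simp]: "pol (dual_par E) (i,a) = (if i = 1 then \<not> pol E a else pol E a)"
  by (simp add: dual_par_def)

lemma pol_dual_par_cong: "pol E a = pol E b \<Longrightarrow> pol (dual_par E) (i,a) = pol (dual_par E) (i,b)"
  by simp

lemma con_dual_par:
  "X \<in> con (dual_par E) \<longleftrightarrow> X \<subseteq> ev (dual_par E) \<and> finite X \<and> side 1 X \<in> con E \<and> side 2 X \<in> con E"
  by (simp add: dual_par_def side_def)

lemma pol_dual_par_swap: "i = 1 \<or> i = 2 \<Longrightarrow> pol (dual_par E) (3 - i, a) \<longleftrightarrow> \<not> pol (dual_par E) (i,a)"
  by auto

lemma finite_dual_par:
  assumes "X \<subseteq> ev (dual_par E)" "finite (side 1 X)" "finite (side 2 X)"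
  shows "finite X"
proof -
  have "X \<subseteq> Pair 1 ` side 1 X \<union> Pair 2 ` side 2 X"
  proof
    fix p assume "p \<in> X"
    with assms(1) show "p \<in> Pair 1 ` side 1 X \<union> Pair 2 ` side 2 X"
      by (cases p) (auto simp: image_iff)
  qed
  then show ?thesis using assms(2,3) by (meson finite_Un finite_imageI finite_subset)
qed

lemma is_es_dual_par:
  assumes E: "is_es E"
  shows "is_es (dual_par E)"
proof (rule is_esI)
  fix p q
  assume "leq (dual_par E) p q" "leq (dual_par E) q p"
  then show "p = q" using es_antisym[OF E] by (cases p, cases q) auto
next
  fix p q r
  assume "leq (dual_par E) p q" "leq (dual_par E) q r"
  then show "leq (dual_par E) p r" using es_trans[OF E] by (cases p, cases q, cases r) auto
next
  fix p assume "p \<in> ev (dual_par E)"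
  then obtain i a where p: "p = (i,a)" "a \<in> ev E" by (cases p) auto
  have "{q. leq (dual_par E) q p} \<subseteq> Pair i ` {b. leq E b a}" using p by auto
  then show "finite {q. leq (dual_par E) q p}"
    using es_finite_below[OF E p(2)] finite_subset by blast
next
  fix X p q
  assume X: "X \<in> con (dual_par E)" and q: "q \<in> X" and pq: "leq (dual_par E) p q"
  obtain i a b where ab: "p = (i,a)" "q = (i,b)" "i = 1 \<or> i = 2" "leq E a b"
    using pq by (cases p, cases q) auto
  have "side j (insert p X) = (if j = i then insert a (side j X) else side j X)" for j
    using ab by auto
  moreover have "insert a (side i X) \<in> con E"
    using es_con_insert_below[OF E, of "side i X" b a] X q ab unfolding con_dual_par by auto
  ultimately show "insert p X \<in> con (dual_par E)"
    using X ab es_leq_ev[OF E ab(4)] unfolding con_dual_par by auto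
next
  fix X Y
  assume "X \<in> con (dual_par E)" "Y \<subseteq> X"
  moreover have "side i Y \<subseteq> side i X" if "Y \<subseteq> X" for i using that by auto
  ultimately show "Y \<in> con (dual_par E)"
    unfolding con_dual_par by (meson es_con_subset[OF E] finite_subset subset_trans)
qed (use es_leq_ev[OF E] es_refl[OF E] es_con_empty[OF E] es_con_singleton[OF E] in
      \<open>auto simp: con_dual_par side_def\<close>)

definition par_config :: "bool \<Rightarrow> 'e esp \<Rightarrow> (nat \<times> 'e) set \<Rightarrow> bool" where
  "par_config cc E x \<longleftrightarrow> x \<subseteq> ev (dual_par E) \<and> config E (side 1 x) \<and> config E (side 2 x) \<and>
     (cc \<longrightarrow> (\<forall>i a. (i,a) \<in> x \<and> pol (dual_par E) (i,a) \<longrightarrow> (3 - i, a) \<in> x))"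

lemma par_configI:
  assumes "x \<subseteq> ev (dual_par E)" "\<And>i. i = 1 \<or> i = 2 \<Longrightarrow> config E (side i x)"
    and "\<And>i a. cc \<Longrightarrow> (i,a) \<in> x \<Longrightarrow> pol (dual_par E) (i,a) \<Longrightarrow> (3 - i, a) \<in> x"
  shows "par_config cc E x"
  using assms unfolding par_config_def by blast

lemma
  assumes "par_config cc E x"
  shows par_config_ev: "x \<subseteq> ev (dual_par E)"
    and par_config_side: "i = 1 \<or> i = 2 \<Longrightarrow> config E (side i x)"
  using assms unfolding par_config_def by auto

lemma par_config_copy: "par_config True E x \<Longrightarrow> (i,a) \<in> x \<Longrightarrow> pol (dual_par E) (i,a) \<Longrightarrow> (3 - i, a) \<in> x"
  unfolding par_config_def by blast

lemma par_config_True_imp_False: "par_config True E x \<Longrightarrow> par_config False E x"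
  unfolding par_config_def by blast

lemma finite_par_config:
  assumes "is_es E" "par_config cc E x"
  shows "finite x"
  using finite_dual_par[OF par_config_ev[OF assms(2)]]
    finite_config[OF assms(1) par_config_side[OF assms(2)]] by blast

lemma config_dual_par_iff:
  assumes E: "is_es E"
  shows "config (dual_par E) x \<longleftrightarrow> par_config False E x"
proof
  assume c: "config (dual_par E) x"
  have con: "x \<subseteq> ev (dual_par E)" "side 1 x \<in> con E" "side 2 x \<in> con E"
    using config_con[OF c] unfolding con_dual_par by blast+
  show "par_config False E x"
  proof (rule par_configI)
    fix i :: nat assume i: "i = 1 \<or> i = 2"
    show "config E (side i x)"
    proof (rule configI)
      show "side i x \<in> con E" using con i by blast
      fix a b assume "b \<in> side i x" "leq E a b"
      then show "a \<in> side i x" using config_down_closed[OF c, of "(i,b)" "(i,a)"] i by simp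
    qed
  qed (use con in blast)+
next
  assume c: "par_config False E x"
  show "config (dual_par E) x"
  proof (rule configI)
    show "x \<in> con (dual_par E)"
      unfolding con_dual_par
      using par_config_ev[OF c] finite_par_config[OF E c] config_con[OF par_config_side[OF c]] by blast
    fix p q assume q: "q \<in> x" and pq: "leq (dual_par E) p q"
    obtain i a b where ab: "p = (i,a)" "q = (i,b)" "i = 1 \<or> i = 2" "leq E a b"
      using pq by (cases p, cases q) auto
    then have "a \<in> side i x" using config_down_closed[OF par_config_side[OF c ab(3)]] q by simp
    then show "p \<in> x" using ab by simp
  qed
qed

lemma par_config_insert:
  assumes x: "par_config cc E x" and i: "i = 1 \<or> i = 2" and t: "t \<in> ev E"
    and cfg: "config E (insert t (side i x))"
    and copy: "cc \<Longrightarrow> pol (dual_par E) (i,t) \<Longrightarrow> (3 - i, t) \<in> x"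
  shows "par_config cc E (insert (i,t) x)"
proof (rule par_configI)
  show "insert (i,t) x \<subseteq> ev (dual_par E)" using par_config_ev[OF x] i t by auto
  have "side j (insert (i,t) x) = (if j = i then insert t (side j x) else side j x)" for j
    by auto
  then show "config E (side j (insert (i,t) x))" if "j = 1 \<or> j = 2" for j
    using cfg par_config_side[OF x that] by simp
  fix j s assume cc and js: "(j,s) \<in> insert (i,t) x" and pos: "pol (dual_par E) (j,s)"
  show "(3 - j, s) \<in> insert (i,t) x"
  proof (cases "(j,s) = (i,t)")
    case True
    then show ?thesis using copy \<open>cc\<close> pos by simp
  next
    case False
    then have "(j,s) \<in> x" using js by blast
    then show ?thesis using par_config_copy[OF _ _ pos] x \<open>cc\<close> by simp
  qed
qed

section \<open>Copycat\<close>

lemma CC_simps [simp]: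
  "ev (CC E) = ev (dual_par E)" "leq (CC E) = CC_leq E" "pol (CC E) = pol (dual_par E)"
  by (simp_all add: CC_def)

lemma con_CC:
  "X \<in> con (CC E) \<longleftrightarrow> X \<subseteq> ev (dual_par E) \<and> finite X \<and> {p. \<exists>q\<in>X. CC_leq E p q} \<in> con (dual_par E)"
  by (simp add: CC_def)

lemma cc_step_cases:
  assumes "cc_step E p q"
  obtains (leq) i a b where "p = (i,a)" "q = (i,b)" "i = 1 \<or> i = 2" "leq E a b"
    | (copy) i a where "p = (i,a)" "q = (3 - i, a)" "i = 1 \<or> i = 2" "a \<in> ev E" "\<not> pol (dual_par E) (i,a)"
  using assms unfolding cc_step_def by (cases p, cases q) auto

lemma cc_step_leq: "i = 1 \<or> i = 2 \<Longrightarrow> leq E a b \<Longrightarrow> cc_step E (i,a) (i,b)"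
  unfolding cc_step_def by simp

lemma cc_step_copy:
  "i = 1 \<or> i = 2 \<Longrightarrow> a \<in> ev E \<Longrightarrow> pol (dual_par E) (i,a) \<Longrightarrow> cc_step E (3 - i, a) (i,a)"
  unfolding cc_step_def by auto

lemma cc_steps_snd:
  assumes E: "is_es E" and "(cc_step E)\<^sup>*\<^sup>* p q" "p \<in> ev (dual_par E)"
  shows "leq E (snd p) (snd q) \<and> q \<in> ev (dual_par E)"
  using assms(2,3)
proof (induction rule: rtranclp_induct)
  case base
  then show ?case using es_refl[OF E] by (cases p) auto
next
  case (step q r)
  from step.hyps(2) show ?case
  proof (cases rule: cc_step_cases)
    case (leq i a b)
    then show ?thesis using step es_leq_ev[OF E leq(4)] es_trans[OF E, of "snd p" a b] by auto
  qed (use step in auto)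
qed

text \<open>Each generating step of copycat causality strictly increases \<open>cc_rank\<close>, which yields
  antisymmetry and the well-founded inductions on configurations of copycat.\<close>

definition cc_rank :: "'e esp \<Rightarrow> nat \<times> 'e \<Rightarrow> nat" where
  "cc_rank E p = 2 * card {b. leq E b (snd p)} + (if pol (dual_par E) p then 1 else 0)"

lemma cc_rank_less_below: "is_es E \<Longrightarrow> leq E a b \<Longrightarrow> a \<noteq> b \<Longrightarrow> cc_rank E (i,a) < cc_rank E (i,b)"
  using card_below_less[of E a b] unfolding cc_rank_def by simp

lemma cc_rank_less_copy:
  "i = 1 \<or> i = 2 \<Longrightarrow> pol (dual_par E) (i,a) \<Longrightarrow> cc_rank E (3 - i, a) < cc_rank E (i,a)"
  using pol_dual_par_swap[of i E a] unfolding cc_rank_def by simp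

lemma cc_rank_less_steps:
  assumes E: "is_es E" and "(cc_step E)\<^sup>*\<^sup>* p q"
  shows "p = q \<or> cc_rank E p < cc_rank E q"
  using assms(2)
proof (induction rule: rtranclp_induct)
  case (step q r)
  have "q = r \<or> cc_rank E q < cc_rank E r"
    using step.hyps(2)
  proof (cases rule: cc_step_cases)
    case (leq i a b)
    then show ?thesis using cc_rank_less_below[OF E leq(4)] by (cases "a = b") auto
  next
    case (copy i a)
    then show ?thesis using cc_rank_less_copy[of "3 - i" E a] pol_dual_par_swap[of i E a] by auto
  qed
  with step.IH show ?case by auto
qed simp

lemma CC_leq_ev: "CC_leq E p q \<Longrightarrow> p \<in> ev (dual_par E) \<and> q \<in> ev (dual_par E)"
  unfolding CC_leq_def by simp

lemma CC_leq_snd: "is_es E \<Longrightarrow> CC_leq E p q \<Longrightarrow> leq E (snd p) (snd q)"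
  unfolding CC_leq_def using cc_steps_snd by blast

lemma CC_leqI: "p \<in> ev (dual_par E) \<Longrightarrow> q \<in> ev (dual_par E) \<Longrightarrow> cc_step E p q \<Longrightarrow> CC_leq E p q"
  unfolding CC_leq_def by simp

lemma par_config_cc_steps_closed:
  assumes x: "par_config True E x" and "(cc_step E)\<^sup>*\<^sup>* p q" "q \<in> x"
  shows "p \<in> x"
  using assms(2,3)
proof (induction rule: converse_rtranclp_induct)
  case (step p p')
  from step.hyps(1) show ?case
  proof (cases rule: cc_step_cases)
    case (leq i a b)
    then show ?thesis using config_down_closed[OF par_config_side[OF x leq(3)]] step.IH step.prems
      by simp
  next
    case (copy i a)
    then have "pol (dual_par E) (3 - i, a)" using pol_dual_par_swap[of i E a] by simp
    then have "(3 - (3 - i), a) \<in> x" using par_config_copy[OF x] step copy by simp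
    then show ?thesis using copy by auto
  qed
qed

lemma CC_down_closure_eq:
  assumes "x \<subseteq> ev (dual_par E)" "\<And>p q. q \<in> x \<Longrightarrow> CC_leq E p q \<Longrightarrow> p \<in> x"
  shows "{p. \<exists>q\<in>x. CC_leq E p q} = x"
  using assms unfolding CC_leq_def by blast

lemma par_config_of_config_CC:
  assumes E: "is_es E" and c: "config (CC E) x"
  shows "par_config True E x"
proof -
  have X: "x \<subseteq> ev (dual_par E)" using config_con[OF c] con_CC by blast
  have down: "p \<in> x" if "q \<in> x" "CC_leq E p q" for p q
    using config_down_closed[OF c] that by simp
  then have "x \<in> con (dual_par E)"
    using config_con[OF c] CC_down_closure_eq[OF X] unfolding con_CC by metis
  then have con: "side 1 x \<in> con E" "side 2 x \<in> con E" using con_dual_par by blast+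
  show "par_config True E x"
  proof (rule par_configI[OF X])
    fix i :: nat assume i: "i = 1 \<or> i = 2"
    show "config E (side i x)"
    proof (rule configI)
      show "side i x \<in> con E" using con i by blast
      fix a b assume b: "b \<in> side i x" and ab: "leq E a b"
      have "CC_leq E (i,a) (i,b)"
        using CC_leqI[OF _ _ cc_step_leq[OF i ab]] es_leq_ev[OF E ab] i by simp
      then show "a \<in> side i x" using down b by simp
    qed
  next
    fix i a assume ia: "(i,a) \<in> x" and pos: "pol (dual_par E) (i,a)"
    have i: "i = 1 \<or> i = 2" and a: "a \<in> ev E" using X ia by auto
    have "(3 - i, a) \<in> ev (dual_par E)" using i a by auto
    then have "CC_leq E (3 - i, a) (i,a)"
      using CC_leqI[OF _ _ cc_step_copy[OF i a pos]] X ia by blast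
    then show "(3 - i, a) \<in> x" using down ia by blast
  qed
qed

lemma config_CC_of_par_config:
  assumes E: "is_es E" and c: "par_config True E x"
  shows "config (CC E) x"
proof -
  have X: "x \<subseteq> ev (dual_par E)" using par_config_ev[OF c] .
  have down: "p \<in> x" if "q \<in> x" "CC_leq E p q" for p q
    using par_config_cc_steps_closed[OF c] that unfolding CC_leq_def by blast
  have "x \<in> con (dual_par E)"
    using config_dual_par_iff[OF E] par_config_True_imp_False[OF c] config_con by blast
  then have "x \<in> con (CC E)"
    unfolding con_CC using CC_down_closure_eq[OF X down] X finite_par_config[OF E c] by simp
  then show "config (CC E) x" using down configI[of x "CC E"] by simp
qed

lemma config_CC_iff: "is_es E \<Longrightarrow> config (CC E) x \<longleftrightarrow> par_config True E x"
  using par_config_of_config_CC config_CC_of_par_config by blast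

lemma finite_CC_below:
  assumes E: "is_es E" and p: "p \<in> ev (dual_par E)"
  shows "finite {q. CC_leq E q p}"
proof -
  have "{q. CC_leq E q p} \<subseteq> {1,2} \<times> {c. leq E c (snd p)}"
    using CC_leq_snd[OF E] CC_leq_ev by fastforce
  moreover have "snd p \<in> ev E" using p by (cases p) auto
  ultimately show ?thesis using es_finite_below[OF E] finite_subset by blast
qed

lemma singleton_con_CC:
  assumes E: "is_es E" and p: "p \<in> ev (dual_par E)"
  shows "{p} \<in> con (CC E)"
proof -
  let ?D = "{q. \<exists>p'\<in>{p}. CC_leq E q p'}"
  have "side i ?D \<subseteq> {c. leq E c (snd p)}" for i
    using CC_leq_snd[OF E] by fastforce
  moreover have "{c. leq E c (snd p)} \<in> con E"
    using p config_con[OF config_below[OF E]] by (cases p) auto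
  moreover have "?D \<subseteq> ev (dual_par E)" using CC_leq_ev by blast
  ultimately have "?D \<in> con (dual_par E)"
    unfolding con_dual_par using finite_CC_below[OF E p] es_con_subset[OF E] by auto
  then show ?thesis using p unfolding con_CC by simp
qed

lemma is_es_CC:
  assumes E: "is_es E"
  shows "is_es (CC E)"
proof (rule is_esI)
  show "finite {q. leq (CC E) q p}" if "p \<in> ev (CC E)" for p
    using finite_CC_below[OF E] that by simp
  show "{p} \<in> con (CC E)" if "p \<in> ev (CC E)" for p
    using singleton_con_CC[OF E] that by simp
next
  fix X Y assume X: "X \<in> con (CC E)" and "Y \<subseteq> X"
  then have "{q. \<exists>p\<in>Y. CC_leq E q p} \<subseteq> {q. \<exists>p\<in>X. CC_leq E q p}" "finite Y"
    using con_CC finite_subset by blast+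
  then show "Y \<in> con (CC E)"
    using X \<open>Y \<subseteq> X\<close> es_con_subset[OF is_es_dual_par[OF E]] unfolding con_CC by blast
next
  fix X p q assume X: "X \<in> con (CC E)" and "q \<in> X" and pq: "leq (CC E) p q"
  then have "{r. \<exists>s\<in>insert p X. CC_leq E r s} = {r. \<exists>s\<in>X. CC_leq E r s}"
    unfolding CC_simps CC_leq_def by (blast intro: rtranclp_trans)
  moreover have "p \<in> ev (dual_par E)" using CC_leq_ev[of E p q] pq by simp
  ultimately show "insert p X \<in> con (CC E)" using X unfolding con_CC by simp
next
  fix p q assume "leq (CC E) p q" "leq (CC E) q p"
  then have "p = q \<or> cc_rank E p < cc_rank E q" "q = p \<or> cc_rank E q < cc_rank E p"
    using cc_rank_less_steps[OF E] unfolding CC_simps CC_leq_def by blast+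
  then show "p = q" by auto
qed (auto simp: CC_leq_def con_CC es_con_empty[OF is_es_dual_par[OF E]] intro: rtranclp_trans)

lemma config_insert_min_rank:
  assumes A: "is_es A" and y: "par_config cc A y" and I: "par_config cc A I" "I \<subseteq> y"
    and e: "(i,a) \<in> y" and min: "\<And>e'. e' \<in> y \<Longrightarrow> cc_rank A e' < cc_rank A (i,a) \<Longrightarrow> e' \<in> I"
  shows "config A (insert a (side i I))"
proof (rule configI)
  have i: "i = 1 \<or> i = 2" using e par_config_ev[OF y] by auto
  have "insert a (side i I) \<subseteq> side i y" using e I(2) by auto
  then show "insert a (side i I) \<in> con A"
    using es_con_subset[OF A config_con[OF par_config_side[OF y i]]] by blast
  fix a' c assume c: "c \<in> insert a (side i I)" and le: "leq A a' c"
  show "a' \<in> insert a (side i I)"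
  proof (cases "c = a \<and> a' \<noteq> a")
    case True
    then have "(i,a') \<in> y" using config_down_closed[OF par_config_side[OF y i]] e le by simp
    then show ?thesis using min cc_rank_less_below[OF A] le True by simp
  next
    case False
    then show ?thesis using c config_down_closed[OF par_config_side[OF I(1) i] _ le] by auto
  qed
qed

lemma par_config_remove_max_rank:
  assumes E: "is_es E" and w: "par_config True E w" and e: "e \<in> w"
    and max: "\<And>e'. e' \<in> w \<Longrightarrow> cc_rank E e' \<le> cc_rank E e"
  shows "par_config True E (w - {e})"
proof (rule par_configI)
  show "w - {e} \<subseteq> ev (dual_par E)" using par_config_ev[OF w] by blast
  show "config E (side j (w - {e}))" if j: "j = 1 \<or> j = 2" for j
  proof (rule config_subset_down_closed[OF E par_config_side[OF w j]])
    fix a c assume c: "c \<in> side j (w - {e})" and le: "leq E a c"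
    then have "c \<in> side j w" by simp
    then have "a \<in> side j w" using config_down_closed[OF par_config_side[OF w j] _ le] by blast
    then have "(j,a) \<in> w" by simp
    moreover have "(j,a) \<noteq> e"
    proof
      assume "(j,a) = e"
      moreover from this have "a \<noteq> c" using c by auto
      ultimately show False using cc_rank_less_below[OF E le, of j] max[of "(j,c)"] c by simp
    qed
    ultimately show "a \<in> side j (w - {e})" by simp
  qed auto
  fix j s assume js: "(j,s) \<in> w - {e}" and pos: "pol (dual_par E) (j,s)"
  have j: "j = 1 \<or> j = 2" using js par_config_ev[OF w] by auto
  have "(3 - j, s) \<noteq> e" using cc_rank_less_copy[OF j pos] max[of "(j,s)"] js by auto
  then show "(3 - j, s) \<in> w - {e}" using par_config_copy[OF w _ pos] js by simp
qed

lemma cc_map_simp [simp]: "cc_map f (i,a) = (i, f a)"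
  by (simp add: cc_map_def)

lemma side_image_cc_map: "side i (cc_map f ` x) = f ` side i x"
  by (force simp: cc_map_def)

lemma
  assumes "esp_map E F f"
  shows esp_map_es_map: "es_map E F f"
    and esp_map_pol: "a \<in> ev E \<Longrightarrow> pol F (f a) = pol E a"
  using assms unfolding esp_map_def by blast+

lemma par_config_image:
  assumes f: "esp_map T A f" and x: "par_config cc T x"
  shows "par_config cc A (cc_map f ` x)"
proof (rule par_configI)
  have X: "x \<subseteq> ev (dual_par T)" using par_config_ev[OF x] .
  then show "cc_map f ` x \<subseteq> ev (dual_par A)"
    using es_map_ev[OF esp_map_es_map[OF f]] by force
  show "config A (side i (cc_map f ` x))" if "i = 1 \<or> i = 2" for i
    using es_map_config[OF esp_map_es_map[OF f] par_config_side[OF x that]]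
    by (simp add: side_image_cc_map)
  fix i a assume cc and ia: "(i,a) \<in> cc_map f ` x" and pos: "pol (dual_par A) (i,a)"
  obtain t where t: "(i,t) \<in> x" "a = f t"
    using ia by (force simp: cc_map_def)
  then have "pol (dual_par T) (i,t)" using X esp_map_pol[OF f] pos by auto
  then have "(3 - i, t) \<in> x" using par_config_copy[of T x] x t(1) \<open>cc\<close> by simp
  then show "(3 - i, a) \<in> cc_map f ` x" using t(2) by force
qed

lemma inj_on_cc_map:
  assumes f: "es_map T A f" and x: "par_config cc T x"
  shows "inj_on (cc_map f) x"
proof (rule inj_onI)
  fix p q assume "p \<in> x" "q \<in> x" "cc_map f p = cc_map f q"
  moreover obtain i t j s where "p = (i,t)" "q = (j,s)" by (cases p, cases q)
  moreover have "i = 1 \<or> i = 2" using par_config_ev[OF x] calculation by auto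
  then have "inj_on f (side i x)" using es_map_inj_on[OF f par_config_side[OF x]] by blast
  ultimately show "p = q" by (auto dest: inj_onD)
qed

lemma rigid_dual_par: "rigid T A f \<Longrightarrow> rigid (dual_par T) (dual_par A) (cc_map f)"
  unfolding rigid_def by (auto simp: cc_map_def split: prod.splits)

lemma cc_step_cc_map:
  assumes f: "rigid T A f" "esp_map T A f" and s: "cc_step T p q"
  shows "cc_step A (cc_map f p) (cc_map f q)"
  using s
proof (cases rule: cc_step_cases)
  case (leq i a b)
  then show ?thesis using f(1) cc_step_leq[of i A] unfolding rigid_def by simp
next
  case (copy i a)
  then show ?thesis
    using es_map_ev[OF esp_map_es_map[OF f(2)]] esp_map_pol[OF f(2)] unfolding cc_step_def by auto
qed

lemma rigid_CC:
  assumes f: "rigid T A f" "esp_map T A f"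
  shows "rigid (CC T) (CC A) (cc_map f)"
  unfolding rigid_def CC_simps
proof (intro allI impI)
  fix p q assume "CC_leq T p q"
  then have "p \<in> ev (dual_par T)" "q \<in> ev (dual_par T)" "(cc_step T)\<^sup>*\<^sup>* p q"
    unfolding CC_leq_def by simp_all
  moreover have "(cc_step A)\<^sup>*\<^sup>* (cc_map f p) (cc_map f q)"
    using calculation(3) by induction (auto intro: rtranclp.rtrancl_into_rtrancl cc_step_cc_map[OF f])
  moreover have "cc_map f e \<in> ev (dual_par A)" if "e \<in> ev (dual_par T)" for e
    using that es_map_ev[OF esp_map_es_map[OF f(2)]] by (cases e) auto
  ultimately show "CC_leq A (cc_map f p) (cc_map f q)" unfolding CC_leq_def by simp
qed

lemma rtranclp_first_step:
  assumes "r\<^sup>*\<^sup>* p q" "p \<noteq> q"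
  obtains c where "r p c" "c \<noteq> p" "r\<^sup>*\<^sup>* c q"
  using assms by (induction rule: converse_rtranclp_induct) (auto intro: converse_rtranclp_into_rtranclp)

lemma imm_CC_imp_cc_step:
  assumes E: "is_es E" and "imm (CC E) p q"
  shows "cc_step E p q"
proof -
  have pq: "CC_leq E p q" "p \<noteq> q" and nomid: "\<And>c. CC_leq E p c \<Longrightarrow> p \<noteq> c \<Longrightarrow> CC_leq E c q \<Longrightarrow> c = q"
    using assms unfolding imm_def lt_def CC_simps by blast+
  obtain c where c: "cc_step E p c" "c \<noteq> p" "(cc_step E)\<^sup>*\<^sup>* c q"
    using pq unfolding CC_leq_def by (auto elim: rtranclp_first_step)
  then have "CC_leq E p c" "CC_leq E c q"
    using pq(1) cc_steps_snd[OF E r_into_rtranclp[of "cc_step E", OF c(1)]] unfolding CC_leq_def by auto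
  then show ?thesis using nomid c by blast
qed

lemma courteous_CC:
  assumes A: "is_es A"
  shows "courteous (CC A) (dual_par A) (\<lambda>p. p)"
  unfolding courteous_def
proof (intro allI impI, elim conjE)
  fix p q assume imm: "imm (CC A) p q" and pol: "pol (CC A) p \<or> \<not> pol (CC A) q"
  have "cc_step A p q" using imm_CC_imp_cc_step[OF A imm] .
  then have le: "leq (dual_par A) p q"
  proof (cases rule: cc_step_cases)
    case (copy i a)
    then show ?thesis using pol pol_dual_par_swap[of i A a] by simp
  qed auto
  have "CC_leq A p q" if "leq (dual_par A) p q" for p q
    using that es_leq_ev[OF is_es_dual_par[OF A]] unfolding CC_leq_def cc_step_def by auto
  then show "imm (dual_par A) p q"
    using imm le unfolding imm_def lt_def CC_simps by blast
qed

definition par_game :: "bool \<Rightarrow> 'e esp \<Rightarrow> (nat \<times> 'e) esp" where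
  "par_game cc E = (if cc then CC E else dual_par E)"

lemma par_game_simps [simp]:
  "par_game True E = CC E" "par_game False E = dual_par E"
  "ev (par_game cc E) = ev (dual_par E)" "pol (par_game cc E) = pol (dual_par E)"
  by (simp_all add: par_game_def)

lemma config_par_game_iff: "is_es E \<Longrightarrow> config (par_game cc E) x \<longleftrightarrow> par_config cc E x"
  by (cases cc) (simp_all add: config_CC_iff config_dual_par_iff)

lemma is_es_par_game: "is_es E \<Longrightarrow> is_es (par_game cc E)"
  by (cases cc) (simp_all add: is_es_CC is_es_dual_par)

lemma rigid_par_game:
  "rigid T A f \<Longrightarrow> esp_map T A f \<Longrightarrow> rigid (par_game cc T) (par_game cc A) (cc_map f)"
  by (cases cc) (simp_all add: rigid_CC rigid_dual_par)

lemma es_map_par_game: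
  assumes "is_es T" "is_es A" "esp_map T A f"
  shows "es_map (par_game cc T) (par_game cc A) (cc_map f)"
  unfolding es_map_def
proof (intro conjI ballI allI impI)
  fix p assume "p \<in> ev (par_game cc T)"
  then show "cc_map f p \<in> ev (par_game cc A)"
    using es_map_ev[OF esp_map_es_map[OF assms(3)]] by (cases p) auto
next
  fix x assume "config (par_game cc T) x"
  then have "par_config cc T x" using config_par_game_iff[OF assms(1)] by blast
  then show "config (par_game cc A) (cc_map f ` x)" "inj_on (cc_map f) x"
    using config_par_game_iff[OF assms(2)] par_config_image[OF assms(3)]
      inj_on_cc_map[OF esp_map_es_map[OF assms(3)]] by blast+
qed

lemma esp_map_par_game:
  assumes "is_es T" "is_es A" "esp_map T A f"
  shows "esp_map (par_game cc T) (par_game cc A) (cc_map f)"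
  unfolding esp_map_def
proof
  show "es_map (par_game cc T) (par_game cc A) (cc_map f)" using es_map_par_game[OF assms] .
  show "\<forall>p\<in>ev (par_game cc T). pol (par_game cc A) (cc_map f p) = pol (par_game cc T) p"
    using esp_map_pol[OF assms(3)] by auto
qed

lemma open_map_par_gameI:
  assumes T: "is_es T" and A: "is_es A" and f: "esp_map T A f" "rigid T A f"
    and lift: "\<And>x y. par_config cc T x \<Longrightarrow> par_config cc A y \<Longrightarrow> cc_map f ` x \<subseteq> y \<Longrightarrow>
      \<exists>z. par_config cc T z \<and> x \<subseteq> z \<and> cc_map f ` z = y"
  shows "open_map (par_game cc T) (par_game cc A) (cc_map f)"
  unfolding open_map_def config_par_game_iff[OF T] config_par_game_iff[OF A]
proof (intro conjI allI impI)
  show "es_map (par_game cc T) (par_game cc A) (cc_map f)" by (rule es_map_par_game[OF T A f(1)])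
  show "rigid (par_game cc T) (par_game cc A) (cc_map f)" by (rule rigid_par_game[OF f(2,1)])
qed (use lift in blast)

lemma esp_map_CC_dual_par: "is_es A \<Longrightarrow> esp_map (CC A) (dual_par A) (\<lambda>p. p)"
  unfolding esp_map_def es_map_def
  by (simp add: config_CC_iff config_dual_par_iff par_config_True_imp_False)

definition span_rel :: "('t \<Rightarrow> 'a) \<Rightarrow> ('t \<Rightarrow> 'a) \<Rightarrow> 't set \<Rightarrow> ('a \<times> 'a) set" where
  "span_rel l r w = (\<lambda>e. (l e, r e)) ` w"

lemma fst_image_converse: "fst ` (R\<inverse>) = snd ` R"
  and snd_image_converse: "snd ` (R\<inverse>) = fst ` R"
  by force+

lemma sym_fam_iff: "\<theta> \<in> sym_fam T l r \<longleftrightarrow> (\<exists>w. config T w \<and> \<theta> = span_rel l r w)"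
  unfolding sym_fam_def span_rel_def by blast

lemma span_rel_iff: "(a,b) \<in> span_rel l r w \<longleftrightarrow> (\<exists>t\<in>w. a = l t \<and> b = r t)"
  unfolding span_rel_def by auto

lemma fst_span_rel [simp]: "fst ` span_rel l r w = l ` w"
  and snd_span_rel [simp]: "snd ` span_rel l r w = r ` w"
  unfolding span_rel_def by force+

lemma span_rel_cc_map_iff:
  "((i,a),(j,b)) \<in> span_rel (cc_map l) (cc_map r) x \<longleftrightarrow> i = j \<and> (\<exists>t. (i,t) \<in> x \<and> a = l t \<and> b = r t)"
  unfolding span_rel_def cc_map_def by force

lemma bij_rel_span_rel: "inj_on l w \<Longrightarrow> inj_on r w \<Longrightarrow> bij_rel (span_rel l r w)"
  unfolding bij_rel_def span_rel_def by (auto dest: inj_onD)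

definition side_rel :: "nat \<Rightarrow> ((nat \<times> 'a) \<times> (nat \<times> 'a)) set \<Rightarrow> ('a \<times> 'a) set" where
  "side_rel i \<theta> = {(a,b). ((i,a),(i,b)) \<in> \<theta>}"

definition sided :: "((nat \<times> 'a) \<times> (nat \<times> 'a)) set \<Rightarrow> bool" where
  "sided \<theta> \<longleftrightarrow> (\<forall>p\<in>\<theta>. \<exists>i a b. (i = 1 \<or> i = 2) \<and> p = ((i,a),(i,b)))"

lemma side_rel_iff [simp]: "(a,b) \<in> side_rel i \<theta> \<longleftrightarrow> ((i,a),(i,b)) \<in> \<theta>"
  by (simp add: side_rel_def)

lemma sidedD: "sided \<theta> \<Longrightarrow> ((i,a),(j,b)) \<in> \<theta> \<Longrightarrow> i = j \<and> (i = 1 \<or> i = 2)"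
  unfolding sided_def by force

lemma sided_eqI:
  assumes "sided \<theta>" "sided \<phi>" "\<And>i. i = 1 \<or> i = 2 \<Longrightarrow> side_rel i \<theta> = side_rel i \<phi>"
  shows "\<theta> = \<phi>"
proof -
  have "p \<in> \<phi>"
    if sided: "sided \<theta>" and p: "p \<in> \<theta>" and eq: "\<And>i. i = 1 \<or> i = 2 \<Longrightarrow> side_rel i \<theta> = side_rel i \<phi>"
    for \<theta> \<phi> p
  proof -
    obtain i a b where i: "i = 1 \<or> i = 2" and p_eq: "p = ((i,a),(i,b))"
      using sided p unfolding sided_def by blast
    then have "(a,b) \<in> side_rel i \<theta>" using p by simp
    then show ?thesis using eq[OF i] p_eq by (metis side_rel_iff)
  qed
  from this[of \<theta> _ \<phi>] this[of \<phi> _ \<theta>] assms show ?thesis by blast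
qed

lemma sided_span_rel: "x \<subseteq> ev (dual_par E) \<Longrightarrow> sided (span_rel (cc_map l) (cc_map r) x)"
  unfolding sided_def span_rel_def cc_map_def by force

lemma side_rel_span_rel: "side_rel i (span_rel (cc_map l) (cc_map r) x) = span_rel l r (side i x)"
proof (intro equalityI subsetI)
  fix p assume "p \<in> side_rel i (span_rel (cc_map l) (cc_map r) x)"
  then obtain a b where "p = (a,b)" "((i,a),(i,b)) \<in> span_rel (cc_map l) (cc_map r) x"
    by (cases p) auto
  then show "p \<in> span_rel l r (side i x)"
    unfolding span_rel_cc_map_iff by (auto simp: span_rel_def)
next
  fix p assume "p \<in> span_rel l r (side i x)"
  then obtain t where "(i,t) \<in> x" "p = (l t, r t)" by (auto simp: span_rel_def)
  then show "p \<in> side_rel i (span_rel (cc_map l) (cc_map r) x)"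
    by (auto simp: span_rel_cc_map_iff)
qed

lemma sided_Id_on: "y \<subseteq> ev (dual_par E) \<Longrightarrow> sided (Id_on y)"
  unfolding sided_def by force

lemma side_rel_Id_on: "side_rel i (Id_on y) = Id_on (side i y)"
  by auto

lemma sided_converse: "sided \<theta> \<Longrightarrow> sided (\<theta>\<inverse>)"
  unfolding sided_def by fastforce

lemma side_rel_converse: "side_rel i (\<theta>\<inverse>) = (side_rel i \<theta>)\<inverse>"
  by auto

lemma sided_relcomp: "sided \<theta> \<Longrightarrow> sided \<phi> \<Longrightarrow> sided (\<theta> O \<phi>)"
  unfolding sided_def by fastforce

lemma side_rel_relcomp: "sided \<theta> \<Longrightarrow> side_rel i (\<theta> O \<phi>) = side_rel i \<theta> O side_rel i \<phi>"
  unfolding sided_def by fastforce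

lemma sided_subset: "sided \<theta> \<Longrightarrow> \<phi> \<subseteq> \<theta> \<Longrightarrow> sided \<phi>"
  unfolding sided_def by blast

lemma fst_side_rel:
  assumes "sided \<theta>"
  shows "fst ` side_rel i \<theta> = side i (fst ` \<theta>)"
proof (intro equalityI subsetI)
  fix a assume "a \<in> side i (fst ` \<theta>)"
  then obtain j b where "((i,a),(j,b)) \<in> \<theta>" by force
  then have "(a,b) \<in> side_rel i \<theta>" using sidedD[OF assms] by (metis side_rel_iff)
  then show "a \<in> fst ` side_rel i \<theta>" by (metis fst_conv image_eqI)
qed force

lemma snd_side_rel:
  assumes "sided \<theta>"
  shows "snd ` side_rel i \<theta> = side i (snd ` \<theta>)"
proof (intro equalityI subsetI)
  fix b assume "b \<in> side i (snd ` \<theta>)"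
  then obtain j a where "((j,a),(i,b)) \<in> \<theta>" by force
  then have "(a,b) \<in> side_rel i \<theta>" using sidedD[OF assms] by (metis side_rel_iff)
  then show "b \<in> snd ` side_rel i \<theta>" by (metis snd_conv image_eqI)
qed force

definition join_sides :: "(nat \<Rightarrow> 't set) \<Rightarrow> (nat \<times> 't) set" where
  "join_sides W = {(i,t). (i = 1 \<or> i = 2) \<and> t \<in> W i}"

lemma join_sides_iff [simp]: "(i,t) \<in> join_sides W \<longleftrightarrow> (i = 1 \<or> i = 2) \<and> t \<in> W i"
  by (simp add: join_sides_def)

lemma side_join_sides: "i = 1 \<or> i = 2 \<Longrightarrow> side i (join_sides W) = W i"
  by auto

lemma
  assumes "iso_family E S"
  shows iso_family_Id_on: "config E x \<Longrightarrow> Id_on x \<in> S"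
    and iso_family_converse: "\<theta> \<in> S \<Longrightarrow> \<theta>\<inverse> \<in> S"
    and iso_family_relcomp: "\<theta> \<in> S \<Longrightarrow> \<phi> \<in> S \<Longrightarrow> snd ` \<theta> = fst ` \<phi> \<Longrightarrow> \<theta> O \<phi> \<in> S"
    and iso_family_restrict: "\<theta> \<in> S \<Longrightarrow> config E x \<Longrightarrow> x \<subseteq> fst ` \<theta> \<Longrightarrow> {p\<in>\<theta>. fst p \<in> x} \<in> S"
  using assms unfolding iso_family_def by simp_all

lemma iso_familyI:
  assumes "\<And>\<theta>. \<theta> \<in> S \<Longrightarrow> config E (fst ` \<theta>) \<and> config E (snd ` \<theta>) \<and> bij_rel \<theta>"
    and "\<And>x. config E x \<Longrightarrow> Id_on x \<in> S"
    and "\<And>\<theta>. \<theta> \<in> S \<Longrightarrow> \<theta>\<inverse> \<in> S"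
    and "\<And>\<theta> \<phi>. \<theta> \<in> S \<Longrightarrow> \<phi> \<in> S \<Longrightarrow> snd ` \<theta> = fst ` \<phi> \<Longrightarrow> \<theta> O \<phi> \<in> S"
    and "\<And>\<theta> x. \<theta> \<in> S \<Longrightarrow> config E x \<Longrightarrow> x \<subseteq> fst ` \<theta> \<Longrightarrow> {p\<in>\<theta>. fst p \<in> x} \<in> S"
    and "\<And>\<theta> y. \<theta> \<in> S \<Longrightarrow> config E y \<Longrightarrow> fst ` \<theta> \<subseteq> y \<Longrightarrow> \<exists>\<theta>'\<in>S. \<theta> \<subseteq> \<theta>' \<and> fst ` \<theta>' = y"
  shows "iso_family E S"
  unfolding iso_family_def by (intro conjI ballI allI impI; (elim conjE)?) (simp_all add: assms)

definition copy_closed :: "'a esp \<Rightarrow> ((nat \<times> 'a) \<times> (nat \<times> 'a)) set \<Rightarrow> bool" where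
  "copy_closed A \<theta> \<longleftrightarrow>
     (\<forall>i a b. ((i,a),(i,b)) \<in> \<theta> \<and> pol (dual_par A) (i,a) \<longrightarrow> ((3 - i, a),(3 - i, b)) \<in> \<theta>)"

lemma copy_closedD:
  "copy_closed A \<theta> \<Longrightarrow> ((i,a),(i,b)) \<in> \<theta> \<Longrightarrow> pol (dual_par A) (i,a) \<Longrightarrow> ((3 - i, a),(3 - i, b)) \<in> \<theta>"
  unfolding copy_closed_def by blast

section \<open>The symmetry of copycat\<close>

locale race_essp =
  fixes A :: "'a esp" and T :: "'t esp" and l r :: "'t \<Rightarrow> 'a"
  assumes essp: "essp A T l r" and race: "race_preserving A T l"
begin

lemma
  shows es_A: "is_es A" and es_T: "is_es T"
    and l_open: "open_map T A l" and r_open: "open_map T A r"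
    and l_esp: "esp_map T A l" and r_esp: "esp_map T A r"
    and lr_inj: "inj_on (\<lambda>e. (l e, r e)) (ev T)" and iso: "iso_family A (sym_fam T l r)"
  using essp unfolding essp_def is_symmetry_def by blast+

lemma
  shows l_es_map: "es_map T A l" and l_rigid: "rigid T A l"
    and r_es_map: "es_map T A r" and r_rigid: "rigid T A r"
  using l_open r_open unfolding open_map_def by blast+

lemma pol_l [simp]: "t \<in> ev T \<Longrightarrow> pol A (l t) = pol T t"
  and pol_r [simp]: "t \<in> ev T \<Longrightarrow> pol A (r t) = pol T t"
  using esp_map_pol[OF l_esp] esp_map_pol[OF r_esp] by blast+

lemma pol_dual_par_l [simp]: "t \<in> ev T \<Longrightarrow> pol (dual_par A) (i, l t) = pol (dual_par T) (i,t)"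
  by auto

lemma lr_eqD: "s \<in> ev T \<Longrightarrow> t \<in> ev T \<Longrightarrow> l s = l t \<Longrightarrow> r s = r t \<Longrightarrow> s = t"
  using lr_inj unfolding inj_on_def by blast

lemma mem_of_span_rel: "(l s, r s) \<in> span_rel l r w \<Longrightarrow> s \<in> ev T \<Longrightarrow> w \<subseteq> ev T \<Longrightarrow> s \<in> w"
  unfolding span_rel_iff using lr_eqD by blast

lemma span_rel_cc_map_mono:
  assumes "span_rel (cc_map l) (cc_map r) x \<subseteq> span_rel (cc_map l) (cc_map r) z"
    and "x \<subseteq> ev (dual_par T)" "z \<subseteq> ev (dual_par T)"
  shows "x \<subseteq> z"
proof
  fix e assume e: "e \<in> x"
  obtain i t where it: "e = (i,t)" by (cases e)
  have "((i, l t),(i, r t)) \<in> span_rel (cc_map l) (cc_map r) x"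
    using e it by (auto simp: span_rel_cc_map_iff)
  then have "((i, l t),(i, r t)) \<in> span_rel (cc_map l) (cc_map r) z" using assms(1) by blast
  then obtain s where "(i,s) \<in> z" "l t = l s" "r t = r s" by (auto simp: span_rel_cc_map_iff)
  moreover from this have "t \<in> ev T" "s \<in> ev T" using assms(2,3) e it by auto
  ultimately have "t = s" using lr_eqD by blast
  with \<open>(i,s) \<in> z\<close> show "e \<in> z" using it by simp
qed

lemma sym_fam_pol:
  assumes "\<phi> \<in> sym_fam T l r" "(a,b) \<in> \<phi>"
  shows "pol A a = pol A b"
proof -
  obtain w where w: "config T w" "\<phi> = span_rel l r w" using assms(1) sym_fam_iff by blast
  then obtain t where "t \<in> w" "a = l t" "b = r t" using assms(2) span_rel_iff by metis
  then show ?thesis using config_ev[OF es_T w(1)] by auto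
qed

definition par_sym :: "bool \<Rightarrow> ((nat \<times> 'a) \<times> (nat \<times> 'a)) set set" where
  "par_sym cc = {span_rel (cc_map l) (cc_map r) x | x. par_config cc T x}"

lemma par_sym_iff: "\<theta> \<in> par_sym cc \<longleftrightarrow> (\<exists>x. par_config cc T x \<and> \<theta> = span_rel (cc_map l) (cc_map r) x)"
  unfolding par_sym_def by blast

lemma par_sym_sides:
  assumes "\<theta> \<in> par_sym cc"
  shows "sided \<theta>" "i = 1 \<or> i = 2 \<Longrightarrow> side_rel i \<theta> \<in> sym_fam T l r" "cc \<Longrightarrow> copy_closed A \<theta>"
proof -
  obtain x where x: "par_config cc T x" "\<theta> = span_rel (cc_map l) (cc_map r) x"
    using assms par_sym_iff by blast
  then show "sided \<theta>" using sided_span_rel[OF par_config_ev] by blast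
  show "side_rel i \<theta> \<in> sym_fam T l r" if "i = 1 \<or> i = 2"
    using x side_rel_span_rel par_config_side[OF x(1) that] sym_fam_iff by metis
  show "copy_closed A \<theta>" if cc
    unfolding copy_closed_def
  proof (intro allI impI, elim conjE)
    fix i a b assume "((i,a),(i,b)) \<in> \<theta>" and pos: "pol (dual_par A) (i,a)"
    then obtain t where t: "(i,t) \<in> x" "a = l t" "b = r t" using x(2) span_rel_cc_map_iff by metis
    then have "t \<in> ev T" using par_config_ev[OF x(1)] by auto
    then have "pol (dual_par T) (i,t)" using pos t(2) by auto
    then have "(3 - i, t) \<in> x" using par_config_copy[of T x i t] x(1) t(1) \<open>cc\<close> by simp
    then show "((3 - i, a),(3 - i, b)) \<in> \<theta>" using x(2) t by (auto simp: span_rel_cc_map_iff)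
  qed
qed

lemma par_config_join_sides:
  assumes W: "\<And>i. i = 1 \<or> i = 2 \<Longrightarrow> config T (W i) \<and> span_rel l r (W i) = side_rel i \<theta>"
    and copy: "cc \<Longrightarrow> copy_closed A \<theta>"
  shows "par_config cc T (join_sides W)"
proof (rule par_configI)
  have W_ev: "W i \<subseteq> ev T" if "i = 1 \<or> i = 2" for i
    using W[OF that] config_ev[OF es_T] by blast
  show "join_sides W \<subseteq> ev (dual_par T)"
  proof
    fix p assume "p \<in> join_sides W"
    then show "p \<in> ev (dual_par T)" using W_ev by (cases p) auto
  qed
  show "config T (side i (join_sides W))" if "i = 1 \<or> i = 2" for i
    using W[OF that] side_join_sides[OF that, of W] by simp
  fix i t assume cc and it: "(i,t) \<in> join_sides W" and pos: "pol (dual_par T) (i,t)"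
  have i: "i = 1 \<or> i = 2" "3 - i = 1 \<or> 3 - i = 2" and t: "t \<in> W i" using it by auto
  have tT: "t \<in> ev T" using W_ev[OF i(1)] t by blast
  have "(l t, r t) \<in> span_rel l r (W i)" using t by (auto simp: span_rel_iff)
  then have "(l t, r t) \<in> side_rel i \<theta>" using W[OF i(1)] by simp
  then have "((3 - i, l t),(3 - i, r t)) \<in> \<theta>"
    using copy_closedD[OF copy[OF \<open>cc\<close>]] pos tT by simp
  then have "(l t, r t) \<in> span_rel l r (W (3 - i))" using W[OF i(2)] by simp
  then show "(3 - i, t) \<in> join_sides W"
    using mem_of_span_rel[OF _ tT W_ev[OF i(2)]] i(2) by simp
qed

lemma par_symI:
  assumes sided: "sided \<theta>" and sides: "\<And>i. i = 1 \<or> i = 2 \<Longrightarrow> side_rel i \<theta> \<in> sym_fam T l r"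
    and copy: "cc \<Longrightarrow> copy_closed A \<theta>"
  shows "\<theta> \<in> par_sym cc"
proof -
  have "\<forall>i. \<exists>w. i = 1 \<or> i = 2 \<longrightarrow> config T w \<and> span_rel l r w = side_rel i \<theta>"
    using sides unfolding sym_fam_iff by metis
  from choice[OF this] obtain W
    where W: "\<And>i. i = 1 \<or> i = 2 \<Longrightarrow> config T (W i) \<and> span_rel l r (W i) = side_rel i \<theta>"
    by blast
  have x: "par_config cc T (join_sides W)" using par_config_join_sides[OF W copy] by blast
  have "span_rel (cc_map l) (cc_map r) (join_sides W) = \<theta>"
  proof (rule sided_eqI[OF sided_span_rel[OF par_config_ev[OF x]] sided])
    fix i :: nat assume "i = 1 \<or> i = 2"
    then show "side_rel i (span_rel (cc_map l) (cc_map r) (join_sides W)) = side_rel i \<theta>"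
      using W side_rel_span_rel side_join_sides by metis
  qed
  then show ?thesis using x par_sym_iff by blast
qed

lemma par_sym_pol:
  assumes "\<theta> \<in> par_sym cc" "((i,a),(j,b)) \<in> \<theta>"
  shows "j = i" "pol (dual_par A) (j,b) = pol (dual_par A) (i,a)"
proof -
  have i: "i = 1 \<or> i = 2" "j = i" using sidedD[OF par_sym_sides(1)[OF assms(1)] assms(2)] by auto
  then have "pol A a = pol A b" using sym_fam_pol[OF par_sym_sides(2)[OF assms(1) i(1)], of a b] assms(2) by simp
  then show "j = i" "pol (dual_par A) (j,b) = pol (dual_par A) (i,a)" using i by auto
qed

lemma par_sym_config_bij:
  assumes "\<theta> \<in> par_sym cc"
  shows "par_config cc A (fst ` \<theta>) \<and> par_config cc A (snd ` \<theta>) \<and> bij_rel \<theta>"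
proof -
  obtain x where x: "par_config cc T x" "\<theta> = span_rel (cc_map l) (cc_map r) x"
    using assms par_sym_iff by blast
  have "inj_on (cc_map l) x" "inj_on (cc_map r) x"
    using inj_on_cc_map[OF l_es_map x(1)] inj_on_cc_map[OF r_es_map x(1)] .
  then have "bij_rel \<theta>" unfolding x(2) by (rule bij_rel_span_rel)
  then show ?thesis using par_config_image[OF l_esp x(1)] par_config_image[OF r_esp x(1)] x(2) by simp
qed

lemma par_sym_Id_on:
  assumes y: "par_config cc A y"
  shows "Id_on y \<in> par_sym cc"
proof (rule par_symI)
  show "sided (Id_on y)" using sided_Id_on[OF par_config_ev[OF y]] .
  show "side_rel i (Id_on y) \<in> sym_fam T l r" if "i = 1 \<or> i = 2" for i
    using iso_family_Id_on[OF iso par_config_side[OF y that]] by (simp add: side_rel_Id_on)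
  show "copy_closed A (Id_on y)" if cc
    unfolding copy_closed_def
  proof (intro allI impI, elim conjE)
    fix i a b assume ab: "((i,a),(i,b)) \<in> Id_on y" and pos: "pol (dual_par A) (i,a)"
    then have "(3 - i, a) \<in> y" using par_config_copy[of A y i a] y that by auto
    then show "((3 - i, a),(3 - i, b)) \<in> Id_on y" using ab by auto
  qed
qed

lemma par_sym_converse:
  assumes \<theta>: "\<theta> \<in> par_sym cc"
  shows "\<theta>\<inverse> \<in> par_sym cc"
proof (rule par_symI)
  show "sided (\<theta>\<inverse>)" using sided_converse[OF par_sym_sides(1)[OF \<theta>]] .
  show "side_rel i (\<theta>\<inverse>) \<in> sym_fam T l r" if "i = 1 \<or> i = 2" for i
    using iso_family_converse[OF iso par_sym_sides(2)[OF \<theta> that]] by (simp add: side_rel_converse)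
  show "copy_closed A (\<theta>\<inverse>)" if cc
    unfolding copy_closed_def
  proof (intro allI impI, elim conjE)
    fix i a b assume ba: "((i,a),(i,b)) \<in> \<theta>\<inverse>" and pos: "pol (dual_par A) (i,a)"
    then have "pol (dual_par A) (i,b)" using par_sym_pol[OF \<theta>, of i b i a] by simp
    then show "((3 - i, a),(3 - i, b)) \<in> \<theta>\<inverse>"
      using copy_closedD[OF par_sym_sides(3)[OF \<theta> that]] ba by simp
  qed
qed

lemma par_sym_relcomp:
  assumes \<theta>: "\<theta> \<in> par_sym cc" and \<phi>: "\<phi> \<in> par_sym cc" and eq: "snd ` \<theta> = fst ` \<phi>"
  shows "\<theta> O \<phi> \<in> par_sym cc"
proof (rule par_symI)
  have s\<theta>: "sided \<theta>" and s\<phi>: "sided \<phi>" using par_sym_sides(1) \<theta> \<phi> by blast+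
  show "sided (\<theta> O \<phi>)" using sided_relcomp[OF s\<theta> s\<phi>] .
  show "side_rel i (\<theta> O \<phi>) \<in> sym_fam T l r" if i: "i = 1 \<or> i = 2" for i
  proof -
    have "snd ` side_rel i \<theta> = fst ` side_rel i \<phi>"
      using eq snd_side_rel[OF s\<theta>] fst_side_rel[OF s\<phi>] by simp
    then show ?thesis
      using iso_family_relcomp[OF iso par_sym_sides(2)[OF \<theta> i] par_sym_sides(2)[OF \<phi> i]]
      by (simp add: side_rel_relcomp[OF s\<theta>])
  qed
  show "copy_closed A (\<theta> O \<phi>)" if cc
    unfolding copy_closed_def
  proof (intro allI impI, elim conjE)
    fix i a c assume "((i,a),(i,c)) \<in> \<theta> O \<phi>" and pos: "pol (dual_par A) (i,a)"
    then obtain m where m: "((i,a),m) \<in> \<theta>" "(m,(i,c)) \<in> \<phi>" by blast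
    obtain j b where mb: "m = (j,b)" by (cases m)
    then have ab: "((i,a),(i,b)) \<in> \<theta>" and bc: "((i,b),(i,c)) \<in> \<phi>"
      and pos_b: "pol (dual_par A) (i,b)"
      using m par_sym_pol[OF \<theta>, of i a j b] pos by auto
    show "((3 - i, a),(3 - i, c)) \<in> \<theta> O \<phi>"
      using copy_closedD[OF par_sym_sides(3)[OF \<theta> that] ab pos]
        copy_closedD[OF par_sym_sides(3)[OF \<phi> that] bc pos_b] by blast
  qed
qed

lemma par_sym_restrict:
  assumes \<theta>: "\<theta> \<in> par_sym cc" and y: "par_config cc A y" and sub: "y \<subseteq> fst ` \<theta>"
  shows "{p\<in>\<theta>. fst p \<in> y} \<in> par_sym cc"
proof (rule par_symI)
  have s\<theta>: "sided \<theta>" using par_sym_sides(1)[OF \<theta>] .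
  show "sided {p\<in>\<theta>. fst p \<in> y}" by (rule sided_subset[OF s\<theta>]) blast
  show "side_rel i {p\<in>\<theta>. fst p \<in> y} \<in> sym_fam T l r" if i: "i = 1 \<or> i = 2" for i
  proof -
    have "side_rel i {p\<in>\<theta>. fst p \<in> y} = {q \<in> side_rel i \<theta>. fst q \<in> side i y}"
      unfolding side_rel_def by auto
    moreover have "side i y \<subseteq> fst ` side_rel i \<theta>"
    proof
      fix a assume "a \<in> side i y"
      then have "(i,a) \<in> fst ` \<theta>" using sub by auto
      then show "a \<in> fst ` side_rel i \<theta>" unfolding fst_side_rel[OF s\<theta>] by simp
    qed
    ultimately show ?thesis
      using iso_family_restrict[OF iso par_sym_sides(2)[OF \<theta> i] par_config_side[OF y i]] by simp
  qed
  show "copy_closed A {p\<in>\<theta>. fst p \<in> y}" if cc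
    unfolding copy_closed_def
  proof (intro allI impI, elim conjE)
    fix i a b assume "((i,a),(i,b)) \<in> {p\<in>\<theta>. fst p \<in> y}" and pos: "pol (dual_par A) (i,a)"
    then have ab: "((i,a),(i,b)) \<in> \<theta>" and ia: "(i,a) \<in> y" by simp_all
    have "(3 - i, a) \<in> y" using par_config_copy[OF _ ia pos] y that by simp
    then show "((3 - i, a),(3 - i, b)) \<in> {p\<in>\<theta>. fst p \<in> y}"
      using copy_closedD[OF par_sym_sides(3)[OF \<theta> that] ab pos] by simp
  qed
qed

lemma config_insert_image:
  assumes v: "config T v" and t: "t \<in> ev T" and below: "\<And>s. leq T s t \<Longrightarrow> s \<noteq> t \<Longrightarrow> s \<in> v"
    and Y: "config A Y" and sub: "insert (l t) (l ` v) \<subseteq> Y"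
  shows "config A (insert (l t) (l ` v))"
proof (rule configI)
  show "insert (l t) (l ` v) \<in> con A" using es_con_subset[OF es_A config_con[OF Y] sub] .
  fix a c assume c: "c \<in> insert (l t) (l ` v)" and le: "leq A a c"
  show "a \<in> insert (l t) (l ` v)"
  proof (cases "c = l t")
    case True
    have "t \<in> {b. leq T b t}" using es_refl[OF es_T t] by simp
    then obtain b where "leq T b t" "a = l b"
      using es_map_below[OF l_es_map config_below[OF es_T t]] le True by blast
    then show ?thesis using below by (cases "b = t") auto
  next
    case False
    then obtain s where s: "s \<in> v" "c = l s" using c by blast
    then show ?thesis using es_map_below[OF l_es_map v s(1)] le by blast
  qed
qed

lemma race_config_insert:
  assumes v: "config T v" "e \<notin> v" "t \<notin> v" "config T (insert e v)" "config T (insert t v)"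
    and pol: "pol T e \<noteq> pol T t" and img: "config A (insert (l t) (insert (l e) (l ` v)))"
  shows "config T (insert t (insert e v))"
proof (rule ccontr)
  assume nc: "\<not> config T (insert t (insert e v))"
  then have nc': "\<not> config T (insert e (insert t v))" by (simp add: insert_commute)
  have no_race: "\<not> config A (insert (l e1) (insert (l e2) (l ` v)))"
    if "config T (insert e1 v)" "config T (insert e2 v)" "e1 \<notin> v" "e2 \<notin> v"
      "\<not> config T (insert e1 (insert e2 v))" "\<not> pol T e1" "pol T e2" for e1 e2
    using race v(1) that unfolding race_preserving_def by blast
  show False
  proof (cases "pol T t")
    case True
    then show False using no_race[OF v(4,5,2,3) nc'] pol img by (metis insert_commute)
  next
    case False
    then show False using no_race[OF v(5,4,3,2) nc] pol img by blast
  qed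
qed

lemma config_insert_race_step:
  assumes v: "config T v" and e: "e \<in> v" and max: "\<And>c. c \<in> v \<Longrightarrow> leq T e c \<Longrightarrow> c = e"
    and t: "t \<in> ev T" "t \<notin> v" and below: "\<And>s. leq T s t \<Longrightarrow> s \<noteq> t \<Longrightarrow> s \<in> v - {e}"
    and pol: "pol T e \<noteq> pol T t" and IH: "config T (insert t (v - {e}))"
    and Y: "config A Y" and sub: "insert (l t) (l ` v) \<subseteq> Y"
  shows "config T (insert t v)"
proof -
  let ?v0 = "v - {e}"
  have v0: "config T ?v0" using config_remove_maximal[OF es_T v max] .
  have ve: "insert e ?v0 = v" using e by blast
  have "config A (insert (l t) (l ` v))" using config_insert_image[OF v t(1) _ Y sub] below by blast
  moreover have "l ` v = insert (l e) (l ` ?v0)" using e by blast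
  ultimately have img: "config A (insert (l t) (insert (l e) (l ` ?v0)))" by simp
  have "e \<notin> ?v0" "t \<notin> ?v0" "config T (insert e ?v0)" using t(2) v ve by auto
  from race_config_insert[OF v0 this IH pol img] show ?thesis using ve by simp
qed

text \<open>The set \<open>X \<inter> X'\<close> is extended towards \<open>X\<close> one event at a time; an inconsistency would
  be a race between \<open>t\<close> and the event just added, which have opposite polarities, and \<open>l\<close> would
  have to preserve that race, contradicting \<open>Y\<close>.\<close>

lemma config_insert_race_free:
  assumes X: "config T X" and X': "config T X'" and t: "t \<in> X'" "t \<notin> X"
    and below: "\<And>s. leq T s t \<Longrightarrow> s \<noteq> t \<Longrightarrow> s \<in> X \<inter> X'"
    and pol: "\<And>e. e \<in> X \<Longrightarrow> e \<notin> X' \<Longrightarrow> pol T e \<noteq> pol T t"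
    and Y: "config A (insert (l t) (l ` X))"
  shows "config T (insert t X)"
proof -
  let ?u = "X \<inter> X'"
  have u: "config T ?u" using config_Int[OF es_T X X'] .
  have tT: "t \<in> ev T" using config_ev[OF es_T X'] t(1) by blast
  have "config T (insert t v)" if "config T v" "?u \<subseteq> v" "v \<subseteq> X" for v
    using that
  proof (induction "card (v - ?u)" arbitrary: v)
    case 0
    have "finite (v - ?u)" using finite_config[OF es_T 0(2)] by blast
    then have "v - ?u = {}" using 0(1) by simp
    then have "v = ?u" using 0(3) by blast
    then have "insert t v \<subseteq> X'" using t(1) by blast
    then have "insert t v \<in> con T" by (rule es_con_subset[OF es_T config_con[OF X']])
    then show ?case by (rule config_insertI[OF 0(2)]) (use below \<open>v = ?u\<close> in blast)
  next
    case (Suc n)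
    then have "v \<noteq> ?u" by force
    then obtain e where e: "e \<in> v" "e \<notin> ?u" and max: "\<And>c. c \<in> v \<Longrightarrow> leq T e c \<Longrightarrow> c = e"
      using finite_has_maximal_outside[OF es_T u finite_config[OF es_T Suc(3)] Suc(4)] by blast
    have "v - {e} - ?u = (v - ?u) - {e}" by blast
    then have n: "n = card (v - {e} - ?u)"
      using Suc(2) e finite_config[OF es_T Suc(3)] by (simp add: card_Diff_singleton)
    have IH: "config T (insert t (v - {e}))"
      by (rule Suc.hyps(1)[OF n config_remove_maximal[OF es_T Suc(3) max]]) (use e Suc(4,5) in blast)+
    show ?case
    proof (rule config_insert_race_step[OF Suc(3) e(1) max tT _ _ _ IH Y])
      show "t \<notin> v" "insert (l t) (l ` v) \<subseteq> insert (l t) (l ` X)" using t(2) Suc(5) by blast+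
      show "s \<in> v - {e}" if "leq T s t" "s \<noteq> t" for s using below[OF that] Suc(4) e(2) by blast
      show "pol T e \<noteq> pol T t" using pol e Suc(5) by blast
    qed
  qed
  from this[OF X] show ?thesis by blast
qed

lemma below_copied_event:
  assumes x: "par_config True T x" and i: "i = 1 \<or> i = 2" and pos: "pol (dual_par T) (i,t)"
    and copy: "(3 - i, t) \<in> x" and Y: "config A (insert (l t) (l ` side i x))"
    and s: "leq T s t" "s \<noteq> t"
  shows "(i,s) \<in> x \<and> (3 - i, s) \<in> x"
proof -
  have i': "3 - i = 1 \<or> 3 - i = 2" and ii: "3 - (3 - i) = i" using i by auto
  have s_copy: "(3 - i, s) \<in> x" using config_down_closed[OF par_config_side[OF x i'] _ s(1)] copy by simp
  have sT: "s \<in> ev T" using es_leq_ev[OF es_T s(1)] by blast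
  have inj: "inj_on l (side (3 - i) x)" using es_map_inj_on[OF l_es_map par_config_side[OF x i']] .
  have "(i,s) \<in> x"
  proof (cases "pol (dual_par T) (3 - i, s)")
    case True
    then show ?thesis using par_config_copy[OF x s_copy True] ii by simp
  next
    case False
    then have pos_s: "pol (dual_par T) (i,s)" using pol_dual_par_swap[OF i, of T s] by blast
    have "l s \<noteq> l t"
    proof
      assume "l s = l t"
      from inj_onD[OF inj this] s_copy copy s(2) show False by simp
    qed
    moreover have "leq A (l s) (l t)" using l_rigid s(1) unfolding rigid_def by blast
    then have "l s \<in> insert (l t) (l ` side i x)" using config_down_closed[OF Y insertI1] by blast
    ultimately have "l s \<in> l ` side i x" by blast
    then obtain s' where s': "(i,s') \<in> x" "l s' = l s" by auto
    then have "s' \<in> ev T" using par_config_ev[OF x] by auto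
    then have "pol T s' = pol T s" using pol_l[of s'] pol_l[OF sT] s'(2) by simp
    then have "pol (dual_par T) (i,s') = pol (dual_par T) (i,s)" by (rule pol_dual_par_cong)
    then have "pol (dual_par T) (i,s')" using pos_s by (rule iffD2)
    then have "(3 - i, s') \<in> x" using par_config_copy[OF x s'(1)] by blast
    then have "s' = s" using inj_onD[OF inj s'(2)] s_copy by simp
    then show ?thesis using s'(1) by simp
  qed
  then show ?thesis using s_copy by blast
qed

lemma par_config_insert_copy:
  assumes x: "par_config True T x" and i: "i = 1 \<or> i = 2" and pos: "pol (dual_par T) (i,t)"
    and copy: "(3 - i, t) \<in> x" and new: "(i,t) \<notin> x"
    and Y: "config A (insert (l t) (l ` side i x))"
  shows "par_config True T (insert (i,t) x)"
proof -
  have i': "3 - i = 1 \<or> 3 - i = 2" using i by auto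
  have t: "t \<in> ev T" using par_config_ev[OF x] copy by auto
  have "config T (insert t (side i x))"
  proof (rule config_insert_race_free[OF par_config_side[OF x i] par_config_side[OF x i'] _ _ _ _ Y])
    show "t \<in> side (3 - i) x" "t \<notin> side i x" using copy new by simp_all
    show "s \<in> side i x \<inter> side (3 - i) x" if "leq T s t" "s \<noteq> t" for s
      using below_copied_event[OF x i pos copy Y that] by simp
    fix e assume e: "e \<in> side i x" "e \<notin> side (3 - i) x"
    have "\<not> pol (dual_par T) (i,e)"
    proof
      assume "pol (dual_par T) (i,e)"
      then have "(3 - i, e) \<in> x" using par_config_copy[OF x] e(1) by simp
      with e(2) show False by simp
    qed
    then show "pol T e \<noteq> pol T t" using pos by (auto split: if_splits)
  qed
  then show ?thesis using par_config_insert[OF x i t] copy by blast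
qed

lemma par_config_insert_lift:
  assumes x: "par_config cc T x" and i: "i = 1 \<or> i = 2"
    and Y: "config A (insert a (l ` side i x))" and new: "a \<notin> l ` side i x"
    and neg: "cc \<Longrightarrow> \<not> pol (dual_par A) (i,a)"
  obtains t where "par_config cc T (insert (i,t) x)" "l t = a"
proof -
  have X: "config T (side i x)" using par_config_side[OF x i] .
  have "l ` side i x \<subseteq> insert a (l ` side i x)" by blast
  from open_map_liftD[OF l_open X Y this]
  obtain z where z: "config T z" "side i x \<subseteq> z" "l ` z = insert a (l ` side i x)"
    by blast
  have "a \<in> l ` z" using z(3) by blast
  then obtain t where t: "t \<in> z" "l t = a" by blast
  have "z = insert t (side i x)"
    using inj_on_image_insert_eq[OF es_map_inj_on[OF l_es_map z(1)] z(2) t(1)] z(3) t(2) by simp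
  then have "config T (insert t (side i x))" using z(1) by simp
  moreover have tT: "t \<in> ev T" using config_ev[OF es_T z(1)] t(1) by blast
  moreover have "\<not> pol (dual_par T) (i,t)" if cc
    using neg[OF that] pol_dual_par_l[OF tT, of i] t(2) by metis
  ultimately have "par_config cc T (insert (i,t) x)" using par_config_insert[OF x i] by blast
  from this t(2) show thesis by (rule that)
qed

lemma par_config_add_event:
  assumes x: "par_config cc T x" and y: "par_config cc A y" and sub: "cc_map l ` x \<subseteq> y"
    and e: "(i,a) \<in> y" "(i,a) \<notin> cc_map l ` x"
    and min: "\<And>e'. e' \<in> y \<Longrightarrow> cc_rank A e' < cc_rank A (i,a) \<Longrightarrow> e' \<in> cc_map l ` x"
  obtains t where "par_config cc T (insert (i,t) x)" "l t = a"
proof -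
  have i: "i = 1 \<or> i = 2" using e(1) par_config_ev[OF y] by auto
  have side_img: "side i (cc_map l ` x) = l ` side i x" by (rule side_image_cc_map)
  have Y: "config A (insert a (l ` side i x))"
    using config_insert_min_rank[OF es_A y par_config_image[OF l_esp x] sub e(1) min] side_img by simp
  have new: "a \<notin> l ` side i x"
  proof
    assume "a \<in> l ` side i x"
    then obtain s where s: "(i,s) \<in> x" "a = l s" by auto
    from s(1) have "cc_map l (i,s) \<in> cc_map l ` x" by (rule imageI)
    with e(2) s(2) show False by simp
  qed
  show thesis
  proof (cases "cc \<and> pol (dual_par A) (i,a)")
    case True
    then have "(3 - i, a) \<in> y" using par_config_copy[of A y i a] y e(1) by simp
    moreover have "cc_rank A (3 - i, a) < cc_rank A (i,a)" using cc_rank_less_copy[OF i conjunct2[OF True]] .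
    ultimately have "(3 - i, a) \<in> cc_map l ` x" using min by blast
    then obtain t where t: "(3 - i, t) \<in> x" "l t = a" by (force simp: cc_map_def)
    then have "t \<in> ev T" using par_config_ev[OF x] by auto
    then have pos: "pol (dual_par T) (i,t)" using True t(2) by auto
    have "(i,t) \<notin> x" using new t(2) by force
    then have "par_config True T (insert (i,t) x)"
      using par_config_insert_copy[OF _ i pos t(1) _ ] x True Y t(2) by simp
    then show thesis using that t(2) True by simp
  next
    case False
    then show thesis using par_config_insert_lift[OF x i Y new] that by blast
  qed
qed

text \<open>The events of \<open>y\<close> are lifted in the order of \<open>cc_rank\<close>, so that a positive copycat event
  finds its negative copy already lifted.\<close>

lemma par_config_lift_l:
  assumes x: "par_config cc T x" and y: "par_config cc A y" and sub: "cc_map l ` x \<subseteq> y"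
  shows "\<exists>z. par_config cc T z \<and> x \<subseteq> z \<and> cc_map l ` z = y"
  using assms
proof (induction "card (y - cc_map l ` x)" arbitrary: x)
  case 0
  have "finite (y - cc_map l ` x)" using finite_par_config[OF es_A y] by blast
  then have "y - cc_map l ` x = {}" using 0(1) by simp
  then have "cc_map l ` x = y" using 0(4) by blast
  then show ?case using 0(2) by blast
next
  case (Suc n)
  let ?I = "cc_map l ` x"
  have fin: "finite (y - ?I)" using finite_par_config[OF es_A y] by blast
  moreover have "y - ?I \<noteq> {}" using Suc(2) by force
  ultimately obtain e where e: "e \<in> y - ?I" and min: "\<And>e'. e' \<in> y - ?I \<Longrightarrow> cc_rank A e \<le> cc_rank A e'"
    using finite_has_min_by[of "y - ?I" "cc_rank A"] by blast
  obtain i a where ia: "e = (i,a)" by (cases e)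
  obtain t where t: "par_config cc T (insert (i,t) x)" "l t = a"
  proof (rule par_config_add_event[OF Suc(3) y Suc(5)])
    show "(i,a) \<in> y" "(i,a) \<notin> ?I" using e ia by simp_all
    show "e' \<in> ?I" if "e' \<in> y" "cc_rank A e' < cc_rank A (i,a)" for e'
      using min[of e'] that ia by fastforce
  qed
  have img: "cc_map l ` insert (i,t) x = insert e ?I" using ia t(2) by simp
  then have "y - cc_map l ` insert (i,t) x = (y - ?I) - {e}" by blast
  then have n: "n = card (y - cc_map l ` insert (i,t) x)" using Suc(2) e fin by simp
  have "cc_map l ` insert (i,t) x \<subseteq> y" using img e Suc(5) by simp
  from Suc.hyps(1)[OF n t(1) y this]
  obtain z where "par_config cc T z" "insert (i,t) x \<subseteq> z" "cc_map l ` z = y" by blast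
  then show ?case by blast
qed

lemma par_sym_extend:
  assumes \<theta>: "\<theta> \<in> par_sym cc" and y: "par_config cc A y" and sub: "fst ` \<theta> \<subseteq> y"
  shows "\<exists>\<theta>'\<in>par_sym cc. \<theta> \<subseteq> \<theta>' \<and> fst ` \<theta>' = y"
proof -
  obtain x where x: "par_config cc T x" "\<theta> = span_rel (cc_map l) (cc_map r) x"
    using \<theta> par_sym_iff by blast
  have "cc_map l ` x \<subseteq> y" using sub x(2) by simp
  then obtain z where z: "par_config cc T z" "x \<subseteq> z" "cc_map l ` z = y"
    using par_config_lift_l[OF x(1) y] by blast
  have "span_rel (cc_map l) (cc_map r) z \<in> par_sym cc" using z(1) par_sym_iff by blast
  moreover have "\<theta> \<subseteq> span_rel (cc_map l) (cc_map r) z" using x(2) z(2) unfolding span_rel_def by blast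
  moreover have "fst ` span_rel (cc_map l) (cc_map r) z = y" using z(3) by simp
  ultimately show ?thesis by blast
qed

lemma par_config_lift_r:
  assumes x: "par_config cc T x" and y: "par_config cc A y" and sub: "cc_map r ` x \<subseteq> y"
  shows "\<exists>z. par_config cc T z \<and> x \<subseteq> z \<and> cc_map r ` z = y"
proof -
  let ?\<theta> = "span_rel (cc_map l) (cc_map r) x"
  have "?\<theta> \<in> par_sym cc" using x par_sym_iff by blast
  then have conv: "?\<theta>\<inverse> \<in> par_sym cc" by (rule par_sym_converse)
  have "fst ` ?\<theta>\<inverse> \<subseteq> y" using sub by (simp add: fst_image_converse)
  from par_sym_extend[OF conv y this]
  obtain \<theta>' where \<theta>': "\<theta>' \<in> par_sym cc" "?\<theta>\<inverse> \<subseteq> \<theta>'" "fst ` \<theta>' = y" by blast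
  from par_sym_converse[OF \<theta>'(1)]
  obtain z where z: "par_config cc T z" "\<theta>'\<inverse> = span_rel (cc_map l) (cc_map r) z"
    unfolding par_sym_iff by blast
  have "?\<theta> \<subseteq> \<theta>'\<inverse>" using \<theta>'(2) by (simp add: converse_subset_swap)
  then have "?\<theta> \<subseteq> span_rel (cc_map l) (cc_map r) z" using z(2) by simp
  then have "x \<subseteq> z" by (rule span_rel_cc_map_mono[OF _ par_config_ev[OF x] par_config_ev[OF z(1)]])
  moreover have "cc_map r ` z = y" using arg_cong[OF z(2), of "image snd"] \<theta>'(3)
    by (simp add: snd_image_converse)
  ultimately show ?thesis using z(1) by blast
qed

lemma sym_fam_par_game: "sym_fam (par_game cc T) (cc_map l) (cc_map r) = par_sym cc"
  unfolding sym_fam_def par_sym_def span_rel_def config_par_game_iff[OF es_T] by simp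

lemma iso_family_par_sym: "iso_family (par_game cc A) (par_sym cc)"
proof (rule iso_familyI)
  fix \<theta> assume "\<theta> \<in> par_sym cc"
  then show "config (par_game cc A) (fst ` \<theta>) \<and> config (par_game cc A) (snd ` \<theta>) \<and> bij_rel \<theta>"
    using par_sym_config_bij config_par_game_iff[OF es_A] by simp
qed (simp_all add: config_par_game_iff[OF es_A] par_sym_Id_on par_sym_converse par_sym_relcomp
      par_sym_restrict par_sym_extend)

lemma open_map_par_game:
  shows "open_map (par_game cc T) (par_game cc A) (cc_map l)"
    and "open_map (par_game cc T) (par_game cc A) (cc_map r)"
  using open_map_par_gameI[OF es_T es_A l_esp l_rigid par_config_lift_l]
    open_map_par_gameI[OF es_T es_A r_esp r_rigid par_config_lift_r] by blast+

lemma essp_par_game: "essp (par_game cc A) (par_game cc T) (cc_map l) (cc_map r)"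
  unfolding essp_def is_symmetry_def
proof (intro conjI)
  show "inj_on (\<lambda>e. (cc_map l e, cc_map r e)) (ev (par_game cc T))"
    using lr_inj by (auto simp: inj_on_def)
  show "iso_family (par_game cc A) (sym_fam (par_game cc T) (cc_map l) (cc_map r))"
    unfolding sym_fam_par_game by (rule iso_family_par_sym)
qed (simp_all add: is_es_par_game es_A es_T open_map_par_game esp_map_par_game l_esp r_esp)

section \<open>Copycat is a \<open>\<sim>\<close>-strategy\<close>

lemma par_sym_insert_negative:
  assumes \<theta>: "\<theta> \<in> par_sym True" and ins: "insert (a1,a2) \<theta> \<in> par_sym False"
    and neg: "\<not> pol (dual_par A) a1"
  shows "insert (a1,a2) \<theta> \<in> par_sym True"
proof (rule par_symI)
  show "sided (insert (a1,a2) \<theta>)" using par_sym_sides(1)[OF ins] .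
  show "side_rel i (insert (a1,a2) \<theta>) \<in> sym_fam T l r" if "i = 1 \<or> i = 2" for i
    using par_sym_sides(2)[OF ins that] .
  show "copy_closed A (insert (a1,a2) \<theta>)"
    unfolding copy_closed_def
  proof (intro allI impI, elim conjE)
    fix i a b assume "((i,a),(i,b)) \<in> insert (a1,a2) \<theta>" and pos: "pol (dual_par A) (i,a)"
    with neg have "((i,a),(i,b)) \<in> \<theta>" by auto
    then show "((3 - i, a),(3 - i, b)) \<in> insert (a1,a2) \<theta>"
      using copy_closedD[OF par_sym_sides(3)[OF \<theta>] _ pos] by blast
  qed
qed

lemma strong_receptive_par_sym: "strong_receptive (dual_par A) (par_sym True) (par_sym False) (\<lambda>p. p)"
  unfolding strong_receptive_def
proof (intro allI impI, elim conjE)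
  fix \<theta> a1 a2
  assume \<theta>: "\<theta> \<in> par_sym True" and new: "a1 \<notin> fst ` image_rel (\<lambda>p. p) \<theta>"
    and ins: "insert (a1,a2) (image_rel (\<lambda>p. p) \<theta>) \<in> par_sym False"
    and neg: "\<not> pol (dual_par A) a1"
  have id: "image_rel (\<lambda>p. p) \<theta> = \<theta>" unfolding image_rel_def by simp
  have "insert (a1,a2) \<theta> \<in> par_sym True" using par_sym_insert_negative[OF \<theta> _ neg] ins id by simp
  then show "\<exists>!p. fst p \<notin> fst ` \<theta> \<and> insert p \<theta> \<in> par_sym True \<and> fst p = a1 \<and> snd p = a2"
    using new id by (intro ex1I[of _ "(a1,a2)"]) auto
qed

lemma positive_extension_new_event:
  assumes x: "par_config True T x" and z: "par_config True T z"
    and ext: "ext_pol (pol (dual_par A)) True (span_rel (cc_map l) (cc_map r) x) (span_rel (cc_map l) (cc_map r) z)"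
    and new: "(i,t) \<in> z" "(i,t) \<notin> x"
  shows "pol (dual_par T) (i,t) \<and> (3 - i, t) \<in> x"
proof -
  let ?\<theta> = "span_rel (cc_map l) (cc_map r) x" and ?\<theta>' = "span_rel (cc_map l) (cc_map r) z"
  have old: "e \<in> x" if "e \<in> z" "(cc_map l e, cc_map r e) \<in> ?\<theta>" for e
  proof -
    have "span_rel (cc_map l) (cc_map r) {e} \<subseteq> ?\<theta>" using that(2) by (simp add: span_rel_def)
    moreover have "{e} \<subseteq> ev (dual_par T)" using that(1) par_config_ev[OF z] by blast
    ultimately show ?thesis using span_rel_cc_map_mono[OF _ _ par_config_ev[OF x]] by blast
  qed
  have new_pos: "pol (dual_par A) (fst p)" if "p \<in> ?\<theta>'" "p \<notin> ?\<theta>" for p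
    using ext that unfolding ext_pol_def by blast
  have i: "i = 1 \<or> i = 2" and t: "t \<in> ev T" using new(1) par_config_ev[OF z] by auto
  have "((i, l t),(i, r t)) \<notin> ?\<theta>" using old[OF new(1)] new(2) by auto
  moreover have "((i, l t),(i, r t)) \<in> ?\<theta>'" using new(1) by (auto simp: span_rel_cc_map_iff)
  ultimately have "pol (dual_par A) (i, l t)" using new_pos by fastforce
  then have pos: "pol (dual_par T) (i,t)" using pol_dual_par_l[OF t] by blast
  have copy: "(3 - i, t) \<in> z" using par_config_copy[OF z new(1) pos] .
  have "\<not> pol (dual_par A) (3 - i, l t)" using pos t pol_dual_par_swap[OF i, of A "l t"] by simp
  moreover have "((3 - i, l t),(3 - i, r t)) \<in> ?\<theta>'" using copy by (auto simp: span_rel_cc_map_iff)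
  ultimately have "((3 - i, l t),(3 - i, r t)) \<in> ?\<theta>" using new_pos by fastforce
  then have "(3 - i, t) \<in> x" using old[OF copy] by simp
  with pos show ?thesis by blast
qed

lemma par_config_insert_copy_image:
  assumes V: "par_config True T V" and i: "i = 1 \<or> i = 2" and pos: "pol (dual_par T) (i,t)"
    and copy: "(3 - i, t) \<in> V" and new: "(i,t) \<notin> V"
    and below: "\<And>s. leq T s t \<Longrightarrow> s \<noteq> t \<Longrightarrow> (i,s) \<in> V"
    and Z: "par_config True A Z" and sub: "cc_map l ` insert (i,t) V \<subseteq> Z"
  shows "par_config True T (insert (i,t) V)"
proof -
  have t: "t \<in> ev T" using par_config_ev[OF V] copy by auto
  have "config A (insert (l t) (l ` side i V))"
  proof (rule config_insert_image[OF par_config_side[OF V i] t _ par_config_side[OF Z i]])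
    show "s \<in> side i V" if "leq T s t" "s \<noteq> t" for s using below[OF that] by simp
    show "insert (l t) (l ` side i V) \<subseteq> side i Z"
    proof
      fix a assume "a \<in> insert (l t) (l ` side i V)"
      then have "a = l t \<or> (\<exists>s. (i,s) \<in> V \<and> a = l s)" by auto
      then obtain s where s: "(i,s) \<in> insert (i,t) V" "a = l s" by blast
      then have "cc_map l (i,s) \<in> Z" using sub by blast
      then show "a \<in> side i Z" using s(2) by simp
    qed
  qed
  then show ?thesis using par_config_insert_copy[OF V i pos copy new] by blast
qed

lemma par_config_union_step:
  assumes V: "par_config True T (z1 \<union> (w - {(i,t)}))" and w: "par_config True T w" "(i,t) \<in> w"
    and new: "(i,t) \<notin> z1" "pol (dual_par T) (i,t)" "(3 - i, t) \<in> z1"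
    and img: "par_config True A Z" "cc_map l ` insert (i,t) (z1 \<union> w) \<subseteq> Z"
  shows "par_config True T (z1 \<union> w)"
proof -
  have i: "i = 1 \<or> i = 2" using par_config_ev[OF w(1)] w(2) by auto
  have "par_config True T (insert (i,t) (z1 \<union> (w - {(i,t)})))"
  proof (rule par_config_insert_copy_image[OF V i new(2) _ _ _ img(1)])
    show "(3 - i, t) \<in> z1 \<union> (w - {(i,t)})" "(i,t) \<notin> z1 \<union> (w - {(i,t)})" using new by auto
    show "(i,s) \<in> z1 \<union> (w - {(i,t)})" if "leq T s t" "s \<noteq> t" for s
      using config_down_closed[OF par_config_side[OF w(1) i] _ that(1)] w(2) that(2) by auto
    show "cc_map l ` insert (i,t) (z1 \<union> (w - {(i,t)})) \<subseteq> Z" using img(2) by blast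
  qed
  moreover have "insert (i,t) (z1 \<union> (w - {(i,t)})) = z1 \<union> w" using w(2) by blast
  ultimately show ?thesis by simp
qed

lemma par_config_union:
  assumes z1: "par_config True T z1" and z2: "par_config True T z2"
    and new: "\<And>i t. (i,t) \<in> z2 \<Longrightarrow> (i,t) \<notin> z1 \<Longrightarrow> pol (dual_par T) (i,t) \<and> (3 - i, t) \<in> z1"
    and img: "par_config True A (cc_map l ` z1 \<union> cc_map l ` z2)"
  shows "par_config True T (z1 \<union> z2)"
proof -
  have "par_config True T (z1 \<union> w)" if "par_config True T w" "w \<subseteq> z2" for w
    using that
  proof (induction "card w" arbitrary: w)
    case 0
    then have "w = {}" using finite_par_config[OF es_T] by simp
    then show ?case using z1 by simp
  next
    case (Suc n)
    have fin: "finite w" using finite_par_config[OF es_T Suc(3)] .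
    then have "w \<noteq> {}" using Suc(2) by auto
    then obtain e where e: "e \<in> w" and max: "\<And>e'. e' \<in> w \<Longrightarrow> cc_rank T e' \<le> cc_rank T e"
      using finite_has_max_by[OF fin, of "cc_rank T"] by blast
    obtain i t where it: "e = (i,t)" by (cases e)
    have w': "par_config True T (w - {e})" using par_config_remove_max_rank[OF es_T Suc(3) e max] .
    have "n = card (w - {e})" using Suc(2) e fin by simp
    then have IH: "par_config True T (z1 \<union> (w - {e}))" using Suc.hyps(1) w' Suc(4) by blast
    show ?case
    proof (cases "e \<in> z1")
      case True
      then have "z1 \<union> w = z1 \<union> (w - {e})" by blast
      then show ?thesis using IH by simp
    next
      case False
      have "(i,t) \<in> z2" "(i,t) \<notin> z1" using e it Suc(4) False by blast+
      then have "pol (dual_par T) (i,t)" "(3 - i, t) \<in> z1" using new by blast+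
      moreover have "cc_map l ` insert (i,t) (z1 \<union> w) \<subseteq> cc_map l ` z1 \<union> cc_map l ` z2"
        using e it Suc(4) by blast
      ultimately show ?thesis
        using par_config_union_step[OF IH[unfolded it] Suc(3) e[unfolded it] \<open>(i,t) \<notin> z1\<close> _ _ img]
        by blast
    qed
  qed
  from this[OF z2] show ?thesis by blast
qed

lemma thin_par_sym: "thin_wrt (pol (dual_par A)) (CC A) (par_sym True)"
  unfolding thin_wrt_def
proof (intro allI impI, elim conjE)
  fix \<theta> \<theta>1 \<theta>2
  assume \<theta>: "\<theta> \<in> par_sym True" and \<theta>1: "\<theta>1 \<in> par_sym True" and \<theta>2: "\<theta>2 \<in> par_sym True"
    and ext1: "ext_pol (pol (dual_par A)) True \<theta> \<theta>1" and ext2: "ext_pol (pol (dual_par A)) True \<theta> \<theta>2"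
    and cfg: "config (CC A) (fst ` \<theta>1 \<union> fst ` \<theta>2)"
  obtain x z1 z2 where x: "par_config True T x" "\<theta> = span_rel (cc_map l) (cc_map r) x"
    and z1: "par_config True T z1" "\<theta>1 = span_rel (cc_map l) (cc_map r) z1"
    and z2: "par_config True T z2" "\<theta>2 = span_rel (cc_map l) (cc_map r) z2"
    using \<theta> \<theta>1 \<theta>2 par_sym_iff by metis
  have "\<theta> \<subseteq> \<theta>1" using ext1 unfolding ext_pol_def by blast
  then have xz1: "x \<subseteq> z1"
    using span_rel_cc_map_mono par_config_ev x z1 by blast
  have "par_config True T (z1 \<union> z2)"
  proof (rule par_config_union[OF z1(1) z2(1)])
    fix i t assume "(i,t) \<in> z2" "(i,t) \<notin> z1"
    then show "pol (dual_par T) (i,t) \<and> (3 - i, t) \<in> z1"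
      using positive_extension_new_event[OF x(1) z2(1)] ext2 x(2) z2(2) xz1 by blast
  next
    show "par_config True A (cc_map l ` z1 \<union> cc_map l ` z2)"
      using cfg config_CC_iff[OF es_A] z1(2) z2(2) by simp
  qed
  moreover have "\<theta>1 \<union> \<theta>2 = span_rel (cc_map l) (cc_map r) (z1 \<union> z2)"
    using z1(2) z2(2) unfolding span_rel_def by blast
  ultimately show "\<theta>1 \<union> \<theta>2 \<in> par_sym True" using par_sym_iff by blast
qed

end

lemma race_essp_of_tcg: "tcg A T l r Sm Sp \<Longrightarrow> race_essp A T l r"
  unfolding tcg_def race_essp_def by blast

theorem mainTheorem2:
  fixes A :: "'a esp" and T :: "'t esp" and l r :: "'t \<Rightarrow> 'a"
    and Sm Sp :: "('a \<times> 'a) set set"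
  assumes "tcg A T l r Sm Sp"
  shows "is_symmetry (CC A) (CC T) (cc_map l) (cc_map r) \<and>
         essp (CC A) (CC T) (cc_map l) (cc_map r) \<and>
         sim_strategy (CC A) (CC T) (cc_map l) (cc_map r)
                      (dual_par A) (dual_par T) (cc_map l) (cc_map r) (\<lambda>p. p)"
proof -
  interpret race_essp A T l r using race_essp_of_tcg[OF assms] .
  have CC: "essp (CC A) (CC T) (cc_map l) (cc_map r)"
    and par: "essp (dual_par A) (dual_par T) (cc_map l) (cc_map r)"
    using essp_par_game[of True] essp_par_game[of False] by simp_all
  have sym_CC: "sym_fam (CC T) (cc_map l) (cc_map r) = par_sym True"
    and sym_par: "sym_fam (dual_par T) (cc_map l) (cc_map r) = par_sym False"
    using sym_fam_par_game[of True] sym_fam_par_game[of False] by simp_all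
  have "image_rel (\<lambda>p. p) \<theta> \<in> par_sym False" if "\<theta> \<in> par_sym True" for \<theta>
    using that par_config_True_imp_False unfolding par_sym_iff image_rel_def by auto
  then have "essp_map (CC A) (CC T) (cc_map l) (cc_map r)
               (dual_par A) (dual_par T) (cc_map l) (cc_map r) (\<lambda>p. p)"
    unfolding essp_map_def sym_CC sym_par using CC par esp_map_CC_dual_par[OF es_A] by blast
  then show ?thesis
    unfolding sim_strategy_def sym_CC sym_par
    using CC courteous_CC[OF es_A] strong_receptive_par_sym thin_par_sym
    by (simp add: essp_def)
qed

end
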